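(* Let $X$ and $Y$ be completely regular Hausdorff spaces, $\mu\in\mathcal{P}_\sigma(X)$, $\nu\in\mathcal{P}_\sigma(Y)$ Baire probability measures, and $c\in lsc_{bi}(X\times Y)$ with $v_{\min}(\mathbf{OP})<+\infty$. Then the following are equivalent: (i) $(\mathbf{DP})$ has a solution; (ii) there exist $\phi^*\in C_b(X)$, $\psi^*\in C_b(Y)$, $\gamma^*\in\Gamma(\mu,\nu)$ with $\phi^*\oplus\psi^*\le c$ and $\int_{X\times Y}c\,d\gamma^*=\int_X\phi^*\,d\mu+\int_Y\psi^*\,d\nu$; (iii) $(\mathbf{DP})$ and $(\mathbf{OP})$ both have solutions and $v_{\max}(\mathbf{DP})=v_{\min}(\mathbf{OP})$. Moreover, if (ii) holds then $(\phi^*,\psi^* )$ is a solution of $(\mathbf{DP})$ and $\gamma^*$ is a solution of $(\mathbf{OP})$.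
   Context: $C_b(Z)$: real-valued bounded continuous functions on $Z$. $\mathcal{M}^1(Z)$: finitely additive $\gamma:\mathcal{U}(Z)\to[0,\infty)$ on the algebra $\mathcal{U}(Z)$ generated by zero-sets, with $\gamma(Z)=1$, regular (for every $A\in\mathcal{U}(Z)$, $\varepsilon>0$ there is a zero-set $F\subseteq A$ with $\gamma(A\setminus F)<\varepsilon$). $lsc_{bi}(Z)$: proper bounded-below lower semicontinuous $g:Z\to\mathbb{R}\cup\{+\infty\}$, with $\int g\,d\gamma:=\sup\{\int f d\gamma: f\in C_b(Z), f\le g\}$. $\mathcal{P}_\sigma(X)$: Baire probability measures. $(\phi\oplus\psi)(x,y):=\phi(x)+\psi(y)$. $\Gamma(\mu,\nu):=\{\gamma\in\mathcal{M}^1(X\times Y):\int\phi\oplus\psi\,d\gamma=\int\phi\,d\mu+\int\psi\,d\nu\ \forall\phi\in C_b(X),\psi\in C_b(Y)\}$. $(\mathbf{OP})$: $v_{\min}(\mathbf{OP}):=\inf\{\int_{X\times Y}c\,d\gamma:\gamma\in\Gamma(\mu,\nu)\}$; a solution is a minimizer in $\Gamma(\mu,\nu)$. $(\mathbf{DP})$: $v_{\max}(\mathbf{DP}):=\sup\{\int_X\phi\,d\mu+\int_Y\psi\,d\nu:\phi\in C_b(X),\psi\in C_b(Y),\phi\oplus\psi\le c\}$; a solution is an admissible pair attaining the supremum. *)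

theory Defs
  imports "HOL-Analysis.Analysis" "HOL-Probability.Probability"
begin

definition Cb :: "('a::topological_space \<Rightarrow> real) set" where
  "Cb = {f. continuous_on UNIV f \<and> bounded (range f)}"

definition zero_sets :: "'a::topological_space set set" where
  "zero_sets = {f -` {0} | f. f \<in> Cb}"

inductive_set zalg :: "'a::topological_space set set" where
  zalg_zero: "A \<in> zero_sets \<Longrightarrow> A \<in> zalg"
| zalg_compl: "A \<in> zalg \<Longrightarrow> - A \<in> zalg"
| zalg_union: "A \<in> zalg \<Longrightarrow> B \<in> zalg \<Longrightarrow> A \<union> B \<in> zalg"

definition baire_sets :: "'a::topological_space set set" where
  "baire_sets = sigma_sets UNIV zero_sets"

definition baire_prob :: "'a::topological_space measure \<Rightarrow> bool" where
  "baire_prob M \<longleftrightarrow> prob_space M \<and> space M = UNIV \<and> sets M = baire_sets"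

definition M1 :: "('a::topological_space set \<Rightarrow> real) set" where
  "M1 = {\<gamma>. (\<forall>A\<in>zalg. \<gamma> A \<ge> 0)
          \<and> (\<forall>A\<in>zalg. \<forall>B\<in>zalg. A \<inter> B = {} \<longrightarrow> \<gamma> (A \<union> B) = \<gamma> A + \<gamma> B)
          \<and> \<gamma> UNIV = 1
          \<and> (\<forall>A\<in>zalg. \<forall>e>0. \<exists>F\<in>zero_sets. F \<subseteq> A \<and> \<gamma> (A - F) < e)}"

text \<open>A simple function is given by a list of (coefficient, set) pairs.\<close>
definition fa_integral :: "('a::topological_space set \<Rightarrow> real) \<Rightarrow> ('a \<Rightarrow> real) \<Rightarrow> real" where
  "fa_integral \<gamma> f = (THE r. \<forall>e>0. \<exists>s :: (real \<times> 'a set) list.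
      (\<forall>p\<in>set s. snd p \<in> zalg)
      \<and> (\<forall>x. \<bar>f x - (\<Sum>p\<leftarrow>s. fst p * indicator (snd p) x)\<bar> \<le> e)
      \<and> \<bar>r - (\<Sum>p\<leftarrow>s. fst p * \<gamma> (snd p))\<bar> \<le> e)"

definition lsc_bi :: "('a::topological_space \<Rightarrow> ereal) set" where
  "lsc_bi = {g. (\<forall>t. closed {x. g x \<le> t})
              \<and> (\<exists>x. g x \<noteq> \<infinity>)
              \<and> (\<exists>b::real. \<forall>x. ereal b \<le> g x)}"

definition lsc_integral :: "('a::topological_space set \<Rightarrow> real) \<Rightarrow> ('a \<Rightarrow> ereal) \<Rightarrow> ereal" where
  "lsc_integral \<gamma> g = Sup {ereal (fa_integral \<gamma> f) | f. f \<in> Cb \<and> (\<forall>x. ereal (f x) \<le> g x)}"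

definition oplus :: "('a \<Rightarrow> real) \<Rightarrow> ('b \<Rightarrow> real) \<Rightarrow> 'a \<times> 'b \<Rightarrow> real" where
  "oplus \<phi> \<psi> = (\<lambda>(x, y). \<phi> x + \<psi> y)"

definition Gamma :: "'a::topological_space measure \<Rightarrow> 'b::topological_space measure
    \<Rightarrow> (('a \<times> 'b) set \<Rightarrow> real) set" where
  "Gamma \<mu> \<nu> = {\<gamma> \<in> M1. \<forall>\<phi>\<in>Cb. \<forall>\<psi>\<in>Cb.
      fa_integral \<gamma> (oplus \<phi> \<psi>) = integral\<^sup>L \<mu> \<phi> + integral\<^sup>L \<nu> \<psi>}"

definition v_min :: "'a::topological_space measure \<Rightarrow> 'b::topological_space measure
    \<Rightarrow> ('a \<times> 'b \<Rightarrow> ereal) \<Rightarrow> ereal" where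
  "v_min \<mu> \<nu> c = (INF \<gamma>\<in>Gamma \<mu> \<nu>. lsc_integral \<gamma> c)"

definition OP_solution where
  "OP_solution \<mu> \<nu> c \<gamma> \<longleftrightarrow> \<gamma> \<in> Gamma \<mu> \<nu> \<and> lsc_integral \<gamma> c = v_min \<mu> \<nu> c"

definition DP_admissible :: "('a::topological_space \<times> 'b::topological_space \<Rightarrow> ereal)
    \<Rightarrow> ('a \<Rightarrow> real) \<Rightarrow> ('b \<Rightarrow> real) \<Rightarrow> bool" where
  "DP_admissible c \<phi> \<psi> \<longleftrightarrow> \<phi> \<in> Cb \<and> \<psi> \<in> Cb \<and> (\<forall>z. ereal (oplus \<phi> \<psi> z) \<le> c z)"

definition v_max :: "'a::topological_space measure \<Rightarrow> 'b::topological_space measure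
    \<Rightarrow> ('a \<times> 'b \<Rightarrow> ereal) \<Rightarrow> ereal" where
  "v_max \<mu> \<nu> c = Sup {ereal (integral\<^sup>L \<mu> \<phi> + integral\<^sup>L \<nu> \<psi>) | \<phi> \<psi>. DP_admissible c \<phi> \<psi>}"

definition DP_solution where
  "DP_solution \<mu> \<nu> c \<phi> \<psi> \<longleftrightarrow> DP_admissible c \<phi> \<psi>
      \<and> ereal (integral\<^sup>L \<mu> \<phi> + integral\<^sup>L \<nu> \<psi>) = v_max \<mu> \<nu> c"

end

theory Submission
  imports Defs
begin

text \<open>
  Weak duality settles everything except (i) \<open>\<Longrightarrow>\<close> (ii): every admissible pair is bounded by the
  cost of every transport plan, so a pair and a plan with equal values are both optimal.

  For (i) \<open>\<Longrightarrow>\<close> (ii) let \<open>V\<close> be the dual value attained by \<open>(\<phi>*, \<psi>*)\<close>. Pricing a bounded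
  continuous \<open>F\<close> by its cheapest domination \<open>F \<le> \<phi> \<oplus> \<psi> + t f\<close> with \<open>t \<ge> 0\<close> and a continuous
  \<open>f \<le> c\<close>, at cost \<open>\<integral>\<phi> d\<mu> + \<integral>\<psi> d\<nu> + t V\<close>, is sublinear. A linear Hahn--Banach minorant \<open>L\<close>
  of this price is positive, normalised, has marginals \<open>\<mu>\<close> and \<open>\<nu>\<close>, and is at most \<open>V\<close> on
  continuous minorants of \<open>c\<close>. A second Hahn--Banach extension of \<open>L\<close> to all bounded
  functions, dominated through outer masses of zero-sets, defines a regular finitely additive
  \<open>\<gamma>\<close> representing \<open>L\<close>. Then \<open>\<integral>c d\<gamma> \<le> V\<close>, and weak duality forces equality.

  Hahn--Banach itself comes from a minimal sublinear minorant (Zorn's lemma), which is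
  necessarily linear.
\<close>

section \<open>Bounded continuous functions, zero-sets and simple functions\<close>

lemma Cb_eq_bcontfun: "Cb = bcontfun"
  by (simp add: Cb_def bcontfun_def)

lemma CbI: "continuous_on UNIV f \<Longrightarrow> (\<And>x. \<bar>f x\<bar> \<le> B) \<Longrightarrow> f \<in> Cb"
  unfolding Cb_eq_bcontfun by (rule bcontfun_normI[where b = B]) simp_all

lemma Cb_continuous: "f \<in> Cb \<Longrightarrow> continuous_on UNIV f"
  by (simp add: Cb_def)

lemma Cb_bound:
  assumes "f \<in> Cb"
  obtains B where "\<And>x. \<bar>f x\<bar> \<le> B" "0 \<le> B"
proof -
  obtain B where "\<forall>y\<in>range f. norm y \<le> B"
    using assms unfolding Cb_def bounded_iff by blast
  then have "\<bar>f x\<bar> \<le> B" for x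
    by simp
  moreover have "0 \<le> B"
    by (rule order_trans[OF abs_ge_zero calculation])
  ultimately show ?thesis using that by blast
qed

lemma Cb_const [simp]: "(\<lambda>x. c) \<in> Cb"
  unfolding Cb_eq_bcontfun by (rule const_bcontfun)

lemma Cb_add: "f \<in> Cb \<Longrightarrow> g \<in> Cb \<Longrightarrow> (\<lambda>x. f x + g x) \<in> Cb"
  unfolding Cb_eq_bcontfun by (rule plus_cont)

lemma Cb_minus: "f \<in> Cb \<Longrightarrow> (\<lambda>x. - f x) \<in> Cb"
  unfolding Cb_eq_bcontfun by (rule uminus_cont)

lemma Cb_diff: "f \<in> Cb \<Longrightarrow> g \<in> Cb \<Longrightarrow> (\<lambda>x. f x - g x) \<in> Cb"
  unfolding Cb_eq_bcontfun by (rule minus_cont)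

lemma Cb_scale: "f \<in> Cb \<Longrightarrow> (\<lambda>x. a * f x) \<in> Cb"
  unfolding Cb_eq_bcontfun using scaleR_cont[of f a] by simp

lemma Cb_mult:
  assumes "f \<in> Cb" "g \<in> Cb"
  shows "(\<lambda>x. f x * g x) \<in> Cb"
proof -
  obtain A B where "\<And>x. \<bar>f x\<bar> \<le> A" "\<And>x. \<bar>g x\<bar> \<le> B" "0 \<le> B"
    using assms Cb_bound by metis
  then have "\<bar>f x * g x\<bar> \<le> A * B" for x
    unfolding abs_mult by (intro mult_mono) (auto intro: order_trans[OF abs_ge_zero])
  then show ?thesis
    using assms by (intro CbI) (auto intro!: continuous_intros simp: Cb_continuous)
qed

lemma Cb_abs:
  assumes "f \<in> Cb"
  shows "(\<lambda>x. \<bar>f x\<bar>) \<in> Cb"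
proof -
  obtain B where "\<And>x. \<bar>f x\<bar> \<le> B" using assms Cb_bound by metis
  then show ?thesis
    using assms by (intro CbI[where B = B]) (auto intro!: continuous_intros simp: Cb_continuous)
qed

lemma Cb_max:
  assumes "f \<in> Cb" "g \<in> Cb"
  shows "(\<lambda>x. max (f x) (g x)) \<in> Cb"
proof -
  have "(\<lambda>x. max (f x) (g x)) = (\<lambda>x. (f x + g x + \<bar>f x - g x\<bar>) / 2)"
    by (auto simp: max_def)
  then show ?thesis
    using Cb_scale[OF Cb_add[OF Cb_add[OF assms] Cb_abs[OF Cb_diff[OF assms]]], of "1/2"] by simp
qed

lemma Cb_min:
  assumes "f \<in> Cb" "g \<in> Cb"
  shows "(\<lambda>x. min (f x) (g x)) \<in> Cb"
proof -
  have "(\<lambda>x. min (f x) (g x)) = (\<lambda>x. - max (- f x) (- g x))"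
    by (auto simp: min_def max_def)
  then show ?thesis using assms by (simp add: Cb_minus Cb_max)
qed

lemma zero_setsI: "f \<in> Cb \<Longrightarrow> Z = {x. f x = 0} \<Longrightarrow> Z \<in> zero_sets"
  unfolding zero_sets_def by (auto simp: vimage_def)

lemma zero_setsE:
  assumes "Z \<in> zero_sets"
  obtains f where "f \<in> Cb" "Z = {x. f x = 0}"
  using assms unfolding zero_sets_def by (auto simp: vimage_def)

lemma zero_sets_Int:
  assumes "A \<in> zero_sets" "B \<in> zero_sets"
  shows "A \<inter> B \<in> zero_sets"
proof -
  obtain f g where "f \<in> Cb" "A = {x. f x = 0}" "g \<in> Cb" "B = {x. g x = 0}"
    using assms zero_setsE by metis
  then show ?thesis
    by (intro zero_setsI[where f = "\<lambda>x. \<bar>f x\<bar> + \<bar>g x\<bar>"]) (auto intro: Cb_add Cb_abs)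
qed

lemma zero_sets_Un:
  assumes "A \<in> zero_sets" "B \<in> zero_sets"
  shows "A \<union> B \<in> zero_sets"
proof -
  obtain f g where "f \<in> Cb" "A = {x. f x = 0}" "g \<in> Cb" "B = {x. g x = 0}"
    using assms zero_setsE by metis
  then show ?thesis
    by (intro zero_setsI[where f = "\<lambda>x. f x * g x"]) (auto intro: Cb_mult)
qed

lemma zero_sets_le: "f \<in> Cb \<Longrightarrow> {x. f x \<le> c} \<in> zero_sets"
  by (rule zero_setsI[where f = "\<lambda>x. max (f x - c) 0"]) (auto intro!: Cb_max Cb_diff)

lemma zero_sets_ge: "f \<in> Cb \<Longrightarrow> {x. c \<le> f x} \<in> zero_sets"
  by (rule zero_setsI[where f = "\<lambda>x. min (f x - c) 0"]) (auto intro!: Cb_min Cb_diff)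

lemma zero_sets_separation:
  assumes "A \<in> zero_sets" "B \<in> zero_sets" "A \<inter> B = {}"
  obtains s where "s \<in> Cb" "\<And>x. 0 \<le> s x" "\<And>x. s x \<le> 1"
    "\<And>x. x \<in> A \<Longrightarrow> s x = 1" "\<And>x. x \<in> B \<Longrightarrow> s x = 0"
proof -
  obtain f g where fg: "f \<in> Cb" "A = {x. f x = 0}" "g \<in> Cb" "B = {x. g x = 0}"
    using assms zero_setsE by metis
  have pos: "0 < \<bar>f x\<bar> + \<bar>g x\<bar>" for x
    using assms(3) fg by (cases "f x = 0") auto
  define s where "s x = \<bar>g x\<bar> / (\<bar>f x\<bar> + \<bar>g x\<bar>)" for x
  have "s \<in> Cb"
  proof (rule CbI)
    show "continuous_on UNIV s"
      unfolding s_def using fg pos[THEN less_imp_neq, THEN not_sym]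
      by (intro continuous_intros) (auto simp: Cb_continuous)
    show "\<bar>s x\<bar> \<le> 1" for x
      using pos[of x] by (simp add: s_def)
  qed
  moreover have "0 \<le> s x" "s x \<le> 1" for x
    using pos[of x] by (simp_all add: s_def)
  moreover have "s x = 1" if "x \<in> A" for x
    using pos[of x] that fg(2) by (simp add: s_def)
  moreover have "s x = 0" if "x \<in> B" for x
    using that fg(4) by (simp add: s_def)
  ultimately show ?thesis
    using that by blast
qed

lemma zalg_Int: "A \<in> zalg \<Longrightarrow> B \<in> zalg \<Longrightarrow> A \<inter> B \<in> zalg"
  using zalg_compl[OF zalg_union[OF zalg_compl zalg_compl]] by simp

lemma zalg_Diff: "A \<in> zalg \<Longrightarrow> B \<in> zalg \<Longrightarrow> A - B \<in> zalg"
  by (simp add: Diff_eq zalg_Int zalg_compl)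

definition simple_fun :: "(real \<times> 'a set) list \<Rightarrow> 'a \<Rightarrow> real" where
  "simple_fun s x = (\<Sum>p\<leftarrow>s. fst p * indicator (snd p) x)"

definition simple_sum :: "('a set \<Rightarrow> real) \<Rightarrow> (real \<times> 'a set) list \<Rightarrow> real" where
  "simple_sum \<gamma> s = (\<Sum>p\<leftarrow>s. fst p * \<gamma> (snd p))"

lemma simple_fun_Nil [simp]: "simple_fun [] x = 0"
  and simple_fun_Cons [simp]: "simple_fun (p # s) x = fst p * indicator (snd p) x + simple_fun s x"
  and simple_fun_append: "simple_fun (s @ s') x = simple_fun s x + simple_fun s' x"
  and simple_fun_scale: "simple_fun (map (\<lambda>p. (a * fst p, snd p)) s) x = a * simple_fun s x"
  by (simp_all add: simple_fun_def sum_list_const_mult mult.assoc o_def)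

lemma simple_sum_Nil [simp]: "simple_sum \<gamma> [] = 0"
  and simple_sum_Cons [simp]: "simple_sum \<gamma> (p # s) = fst p * \<gamma> (snd p) + simple_sum \<gamma> s"
  and simple_sum_append: "simple_sum \<gamma> (s @ s') = simple_sum \<gamma> s + simple_sum \<gamma> s'"
  and simple_sum_scale: "simple_sum \<gamma> (map (\<lambda>p. (a * fst p, snd p)) s) = a * simple_sum \<gamma> s"
  by (simp_all add: simple_sum_def sum_list_const_mult mult.assoc o_def)

lemma Cb_uniform_simple_approx:
  assumes F: "F \<in> Cb" and e: "0 < e"
  obtains s where "\<forall>p\<in>set s. snd p \<in> zalg" "\<And>x. \<bar>F x - simple_fun s x\<bar> \<le> e"
proof -
  obtain M where M: "\<And>x. \<bar>F x\<bar> \<le> M" using Cb_bound[OF F] by metis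
  define K :: int where "K = \<lceil>M / e\<rceil>"
  define A where "A j = {x. \<lfloor>F x / e\<rfloor> = j}" for j :: int
  define s where "s = map (\<lambda>j. (of_int j * e, A j)) [-K..K]"
  have "A j = {x. of_int j * e \<le> F x} - {x. (of_int j + 1) * e \<le> F x}" for j
    using e by (auto simp: A_def floor_eq_iff pos_le_divide_eq pos_divide_less_eq)
  then have "A j \<in> zalg" for j
    by (simp add: zalg_Diff zalg_zero zero_sets_ge F)
  then have "\<forall>p\<in>set s. snd p \<in> zalg"
    by (auto simp: s_def)
  moreover have "\<bar>F x - simple_fun s x\<bar> \<le> e" for x
  proof -
    define j0 where "j0 = \<lfloor>F x / e\<rfloor>"
    have "\<bar>F x / e\<bar> \<le> M / e"
      using M[of x] e by (simp add: abs_divide divide_right_mono)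
    also have "\<dots> \<le> of_int K"
      unfolding K_def by (rule le_of_int_ceiling)
    finally have "- of_int K \<le> F x / e" "F x / e \<le> of_int K"
      unfolding abs_le_iff by linarith+
    then have "j0 \<in> {-K..K}"
      unfolding j0_def by (simp add: le_floor_iff floor_le_iff)
    have "simple_fun s x = (\<Sum>j\<leftarrow>[-K..K]. of_int j * e * indicator (A j) x)"
      by (simp add: s_def simple_fun_def o_def)
    also have "\<dots> = (\<Sum>j\<in>{-K..K}. of_int j * e * indicator (A j) x)"
      using sum_set_upto_conv_sum_list_int[of "\<lambda>j. of_int j * e * indicator (A j) x" "-K" K] by simp
    also have "\<dots> = (\<Sum>j\<in>{-K..K}. if j = j0 then of_int j * e else 0)"
      by (intro sum.cong) (auto simp: A_def j0_def)
    also have "\<dots> = of_int j0 * e"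
      using \<open>j0 \<in> {-K..K}\<close> by simp
    finally have "simple_fun s x = of_int j0 * e" .
    moreover have "of_int j0 \<le> F x / e" "F x / e < of_int j0 + 1"
      unfolding j0_def by linarith+
    then have "of_int j0 * e \<le> F x" "F x < (of_int j0 + 1) * e"
      using e by (simp_all add: pos_le_divide_eq pos_divide_less_eq)
    ultimately show ?thesis by (simp add: algebra_simps)
  qed
  ultimately show ?thesis using that by blast
qed

lemma fa_integral_eqI:
  assumes F: "F \<in> Cb"
    and close: "\<And>s e. \<forall>p\<in>set s. snd p \<in> zalg \<Longrightarrow> (\<And>x. \<bar>F x - simple_fun s x\<bar> \<le> e)
      \<Longrightarrow> \<bar>r - simple_sum \<gamma> s\<bar> \<le> e"
  shows "fa_integral \<gamma> F = r"
  unfolding fa_integral_def simple_fun_def[symmetric] simple_sum_def[symmetric]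
proof (rule the_equality)
  show "\<forall>e>0. \<exists>s. (\<forall>p\<in>set s. snd p \<in> zalg) \<and> (\<forall>x. \<bar>F x - simple_fun s x\<bar> \<le> e)
      \<and> \<bar>r - simple_sum \<gamma> s\<bar> \<le> e"
    by (metis Cb_uniform_simple_approx[OF F] close)
next
  fix r'
  assume r': "\<forall>e>0. \<exists>s. (\<forall>p\<in>set s. snd p \<in> zalg) \<and> (\<forall>x. \<bar>F x - simple_fun s x\<bar> \<le> e)
      \<and> \<bar>r' - simple_sum \<gamma> s\<bar> \<le> e"
  have "\<bar>r' - r\<bar> \<le> e" if "0 < e" for e
  proof -
    obtain s where "\<forall>p\<in>set s. snd p \<in> zalg" "\<forall>x. \<bar>F x - simple_fun s x\<bar> \<le> e / 2"
      "\<bar>r' - simple_sum \<gamma> s\<bar> \<le> e / 2"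
      using r' \<open>0 < e\<close> half_gt_zero by blast
    then have "\<bar>r - simple_sum \<gamma> s\<bar> \<le> e / 2"
      using close by blast
    with \<open>\<bar>r' - simple_sum \<gamma> s\<bar> \<le> e / 2\<close> show ?thesis by linarith
  qed
  then have "\<bar>r' - r\<bar> \<le> 0"
    using field_le_epsilon[of "\<bar>r' - r\<bar>" 0] by simp
  then show "r' = r"
    by simp
qed

section \<open>Hahn--Banach for sublinear functionals on function spaces\<close>

lemma cInf_le_add:
  fixes X Y Z :: "real set"
  assumes "Y \<noteq> {}" "Z \<noteq> {}" "bdd_below X"
    and dominated: "\<And>y z. y \<in> Y \<Longrightarrow> z \<in> Z \<Longrightarrow> \<exists>x\<in>X. x \<le> y + z"
  shows "Inf X \<le> Inf Y + Inf Z"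
proof -
  have "Inf X - Inf Z \<le> Inf Y"
  proof (rule cInf_greatest[OF assms(1)])
    fix y
    assume "y \<in> Y"
    have "Inf X - y \<le> Inf Z"
    proof (rule cInf_greatest[OF assms(2)])
      fix z
      assume "z \<in> Z"
      then obtain x where "x \<in> X" "x \<le> y + z"
        using dominated \<open>y \<in> Y\<close> by blast
      then show "Inf X - y \<le> z"
        using cInf_lower[OF \<open>x \<in> X\<close> assms(3)] by linarith
    qed
    then show "Inf X - Inf Z \<le> y" by linarith
  qed
  then show ?thesis by linarith
qed

lemma cInf_le_scale:
  fixes X Y :: "real set"
  assumes "Y \<noteq> {}" "bdd_below X" "0 < t"
    and dominated: "\<And>y. y \<in> Y \<Longrightarrow> \<exists>x\<in>X. x \<le> t * y"
  shows "Inf X \<le> t * Inf Y"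
proof -
  have "Inf X / t \<le> Inf Y"
  proof (rule cInf_greatest[OF assms(1)])
    fix y
    assume "y \<in> Y"
    then obtain x where "x \<in> X" "x \<le> t * y"
      using dominated by blast
    then show "Inf X / t \<le> y"
      using cInf_lower[OF \<open>x \<in> X\<close> assms(2)] \<open>0 < t\<close> by (simp add: pos_divide_le_eq mult.commute)
  qed
  then show ?thesis
    using \<open>0 < t\<close> by (simp add: pos_divide_le_eq mult.commute)
qed

definition sublinear_on :: "('z \<Rightarrow> real) set \<Rightarrow> (('z \<Rightarrow> real) \<Rightarrow> real) \<Rightarrow> bool" where
  "sublinear_on S q \<longleftrightarrow> (\<forall>f\<in>S. \<forall>g\<in>S. q (\<lambda>x. f x + g x) \<le> q f + q g)
      \<and> (\<forall>f\<in>S. \<forall>a\<ge>0. q (\<lambda>x. a * f x) = a * q f)"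

definition linear_on :: "('z \<Rightarrow> real) set \<Rightarrow> (('z \<Rightarrow> real) \<Rightarrow> real) \<Rightarrow> bool" where
  "linear_on S L \<longleftrightarrow> (\<forall>f\<in>S. \<forall>g\<in>S. L (\<lambda>x. f x + g x) = L f + L g)
      \<and> (\<forall>f\<in>S. \<forall>a. L (\<lambda>x. a * f x) = a * L f)"

lemma sublinear_on_add: "sublinear_on S q \<Longrightarrow> f \<in> S \<Longrightarrow> g \<in> S \<Longrightarrow> q (\<lambda>x. f x + g x) \<le> q f + q g"
  and sublinear_on_scale: "sublinear_on S q \<Longrightarrow> f \<in> S \<Longrightarrow> 0 \<le> a \<Longrightarrow> q (\<lambda>x. a * f x) = a * q f"
  by (simp_all add: sublinear_on_def)

lemma linear_on_add: "linear_on S L \<Longrightarrow> f \<in> S \<Longrightarrow> g \<in> S \<Longrightarrow> L (\<lambda>x. f x + g x) = L f + L g"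
  and linear_on_scale: "linear_on S L \<Longrightarrow> f \<in> S \<Longrightarrow> L (\<lambda>x. a * f x) = a * L f"
  by (simp_all add: linear_on_def)

locale function_space =
  fixes S :: "('z \<Rightarrow> real) set"
  assumes zero_mem: "(\<lambda>x. 0) \<in> S"
    and add_mem: "f \<in> S \<Longrightarrow> g \<in> S \<Longrightarrow> (\<lambda>x. f x + g x) \<in> S"
    and scale_mem: "f \<in> S \<Longrightarrow> (\<lambda>x. a * f x) \<in> S"
begin

lemma uminus_mem: "f \<in> S \<Longrightarrow> (\<lambda>x. - f x) \<in> S"
  using scale_mem[of f "-1"] by simp

lemma sublinear_on_zero: "sublinear_on S q \<Longrightarrow> q (\<lambda>x. 0) = 0"
  using sublinear_on_scale[OF _ zero_mem, of q 0] by simp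

lemma sublinear_on_uminus:
  assumes "sublinear_on S q" "f \<in> S"
  shows "- q (\<lambda>x. - f x) \<le> q f"
  using sublinear_on_add[OF assms(1,2) uminus_mem[OF assms(2)]] sublinear_on_zero[OF assms(1)] by simp

lemma linear_on_uminus: "linear_on S L \<Longrightarrow> f \<in> S \<Longrightarrow> L (\<lambda>x. - f x) = - L f"
  using linear_on_scale[of S L f "-1"] by simp

lemma sublinear_on_Inf:
  fixes A :: "('z \<Rightarrow> real) \<Rightarrow> real set"
  assumes ne: "\<And>F. F \<in> S \<Longrightarrow> A F \<noteq> {}"
    and bdd: "\<And>F. F \<in> S \<Longrightarrow> bdd_below (A F)"
    and add: "\<And>F G a b. F \<in> S \<Longrightarrow> G \<in> S \<Longrightarrow> a \<in> A F \<Longrightarrow> b \<in> A G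
      \<Longrightarrow> \<exists>c\<in>A (\<lambda>x. F x + G x). c \<le> a + b"
    and scale: "\<And>F a t. F \<in> S \<Longrightarrow> 0 < t \<Longrightarrow> a \<in> A F \<Longrightarrow> \<exists>c\<in>A (\<lambda>x. t * F x). c \<le> t * a"
  shows "sublinear_on S (\<lambda>F. Inf (A F))"
proof -
  have scale_le: "Inf (A (\<lambda>x. t * F x)) \<le> t * Inf (A F)" if "F \<in> S" "0 < t" for F t
    using that by (intro cInf_le_scale ne bdd scale scale_mem)
  have scale_eq: "Inf (A (\<lambda>x. t * F x)) = t * Inf (A F)" if "F \<in> S" "0 < t" for F t
  proof -
    have "Inf (A (\<lambda>x. (1 / t) * (t * F x))) \<le> (1 / t) * Inf (A (\<lambda>x. t * F x))"
      using scale_le[OF scale_mem[OF \<open>F \<in> S\<close>, of t], of "1 / t"] \<open>0 < t\<close> by simp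
    moreover have "(\<lambda>x. (1 / t) * (t * F x)) = F"
      using \<open>0 < t\<close> by simp
    ultimately have "t * Inf (A F) \<le> Inf (A (\<lambda>x. t * F x))"
      using \<open>0 < t\<close> by (simp add: field_simps)
    then show ?thesis
      using scale_le[OF that] by simp
  qed
  have "Inf (A (\<lambda>x. 0)) = 0"
    using scale_eq[OF zero_mem, of 2] by simp
  then have "Inf (A (\<lambda>x. a * F x)) = a * Inf (A F)" if "F \<in> S" "0 \<le> a" for F a
    using that scale_eq[of F a] by (cases "a = 0") simp_all
  moreover have "Inf (A (\<lambda>x. F x + G x)) \<le> Inf (A F) + Inf (A G)" if "F \<in> S" "G \<in> S" for F G
    using that by (intro cInf_le_add ne bdd add add_mem)
  ultimately show ?thesis
    unfolding sublinear_on_def by blast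
qed

end

locale sublinear_functional = function_space +
  fixes p :: "('z \<Rightarrow> real) \<Rightarrow> real"
  assumes p_sublinear: "sublinear_on S p"
begin

definition sublinear_minorants :: "(('z \<Rightarrow> real) \<Rightarrow> real) set" where
  "sublinear_minorants = {q. sublinear_on S q \<and> (\<forall>f\<in>S. q f \<le> p f)}"

lemma sublinear_minorant_lower:
  assumes "q \<in> sublinear_minorants" "f \<in> S"
  shows "- p (\<lambda>x. - f x) \<le> q f"
proof -
  have "q (\<lambda>x. - f x) \<le> p (\<lambda>x. - f x)"
    using assms uminus_mem unfolding sublinear_minorants_def by blast
  then show ?thesis
    using assms sublinear_on_uminus[of q f] unfolding sublinear_minorants_def by force
qed

lemma chain_Inf_sublinear_minorant:
  assumes C: "C \<subseteq> sublinear_minorants" "C \<noteq> {}"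
    and chain: "\<And>q q'. q \<in> C \<Longrightarrow> q' \<in> C \<Longrightarrow> (\<forall>f\<in>S. q f \<le> q' f) \<or> (\<forall>f\<in>S. q' f \<le> q f)"
  shows "(\<lambda>f. Inf ((\<lambda>q. q f) ` C)) \<in> sublinear_minorants"
proof -
  have sub: "sublinear_on S q" "\<forall>f\<in>S. q f \<le> p f" if "q \<in> C" for q
    using that C unfolding sublinear_minorants_def by auto
  have bdd: "bdd_below ((\<lambda>q. q f) ` C)" if "f \<in> S" for f
    using sublinear_minorant_lower[OF _ that] C unfolding bdd_below_def by blast
  have "sublinear_on S (\<lambda>f. Inf ((\<lambda>q. q f) ` C))"
  proof (rule sublinear_on_Inf)
    fix F G a b
    assume "F \<in> S" "G \<in> S" "a \<in> (\<lambda>q. q F) ` C" "b \<in> (\<lambda>q. q G) ` C"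
    then obtain q q' where q: "q \<in> C" "a = q F" and q': "q' \<in> C" "b = q' G" by blast
    \<comment> \<open>the smaller of the two functionals handles both summands\<close>
    obtain r where "r \<in> C" "r F \<le> q F" "r G \<le> q' G"
      using chain[OF q(1) q'(1)] \<open>F \<in> S\<close> \<open>G \<in> S\<close> q q' by blast
    moreover have "r (\<lambda>x. F x + G x) \<le> r F + r G"
      using sublinear_on_add[OF sub(1) \<open>F \<in> S\<close> \<open>G \<in> S\<close>] \<open>r \<in> C\<close> .
    ultimately show "\<exists>c\<in>(\<lambda>q. q (\<lambda>x. F x + G x)) ` C. c \<le> a + b"
      using q q' \<open>r \<in> C\<close> by (intro bexI[of _ "r (\<lambda>x. F x + G x)"]) auto
  next
    fix F a and t :: real
    assume "F \<in> S" "0 < t" "a \<in> (\<lambda>q. q F) ` C"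
    then show "\<exists>c\<in>(\<lambda>q. q (\<lambda>x. t * F x)) ` C. c \<le> t * a"
      using sublinear_on_scale[OF sub(1)] by force
  qed (use C bdd in auto)
  moreover have "Inf ((\<lambda>q. q f) ` C) \<le> p f" if "f \<in> S" for f
  proof -
    obtain q where "q \<in> C" using C by blast
    then have "Inf ((\<lambda>q. q f) ` C) \<le> q f"
      by (intro cInf_lower[OF _ bdd[OF that]]) simp
    also have "\<dots> \<le> p f"
      using sub(2)[OF \<open>q \<in> C\<close>] that by blast
    finally show ?thesis .
  qed
  ultimately show ?thesis
    unfolding sublinear_minorants_def by blast
qed

text \<open>Zorn's lemma is applied to the strict epigraphs ordered by inclusion; the epigraph only
  depends on the values on \<^term>\<open>S\<close>, which makes the pointwise order antisymmetric.\<close>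
definition epigraph :: "(('z \<Rightarrow> real) \<Rightarrow> real) \<Rightarrow> (('z \<Rightarrow> real) \<times> real) set" where
  "epigraph q = {(f, r). f \<in> S \<and> q f < r}"

lemma epigraph_subset_iff: "epigraph q \<subseteq> epigraph q' \<longleftrightarrow> (\<forall>f\<in>S. q' f \<le> q f)"
proof
  assume sub: "epigraph q \<subseteq> epigraph q'"
  show "\<forall>f\<in>S. q' f \<le> q f"
  proof (intro ballI leI notI)
    fix f assume "f \<in> S" "q f < q' f"
    then have "(f, (q f + q' f) / 2) \<in> epigraph q - epigraph q'"
      by (auto simp: epigraph_def)
    then show False using sub by blast
  qed
qed (force simp: epigraph_def)

lemma epigraph_chain_bounded:
  assumes chain: "C \<in> chains (epigraph ` sublinear_minorants)"
  shows "\<exists>U\<in>epigraph ` sublinear_minorants. \<forall>X\<in>C. X \<subseteq> U"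
proof (cases "C = {}")
  case True
  have "p \<in> sublinear_minorants"
    using p_sublinear by (simp add: sublinear_minorants_def)
  then show ?thesis using True by blast
next
  case False
  define Q where "Q = {q \<in> sublinear_minorants. epigraph q \<in> C}"
  have C: "C \<subseteq> epigraph ` sublinear_minorants" "\<And>X Y. X \<in> C \<Longrightarrow> Y \<in> C \<Longrightarrow> X \<subseteq> Y \<or> Y \<subseteq> X"
    using chain unfolding chains_def chain_subset_def by auto
  have "Q \<noteq> {}"
    using False C(1) unfolding Q_def by blast
  have bdd: "bdd_below ((\<lambda>q. q f) ` Q)" if "f \<in> S" for f
    using sublinear_minorant_lower[OF _ that] unfolding Q_def bdd_below_def by blast
  have "(\<lambda>f. Inf ((\<lambda>q. q f) ` Q)) \<in> sublinear_minorants"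
  proof (rule chain_Inf_sublinear_minorant)
    fix q q' assume "q \<in> Q" "q' \<in> Q"
    then have "epigraph q \<subseteq> epigraph q' \<or> epigraph q' \<subseteq> epigraph q"
      using C(2) unfolding Q_def by blast
    then show "(\<forall>f\<in>S. q f \<le> q' f) \<or> (\<forall>f\<in>S. q' f \<le> q f)"
      unfolding epigraph_subset_iff by blast
  qed (use \<open>Q \<noteq> {}\<close> in \<open>auto simp: Q_def\<close>)
  moreover have "X \<subseteq> epigraph (\<lambda>f. Inf ((\<lambda>q. q f) ` Q))" if "X \<in> C" for X
  proof -
    obtain q where "q \<in> Q" "X = epigraph q"
      using \<open>X \<in> C\<close> C(1) unfolding Q_def by blast
    then show ?thesis
      using bdd by (simp add: epigraph_subset_iff cInf_lower)
  qed
  ultimately show ?thesis by blast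
qed

lemma minimal_sublinear_minorant_exists:
  "\<exists>m\<in>sublinear_minorants. \<forall>q\<in>sublinear_minorants. (\<forall>f\<in>S. q f \<le> m f) \<longrightarrow> (\<forall>f\<in>S. q f = m f)"
proof -
  have "\<exists>M\<in>epigraph ` sublinear_minorants. \<forall>X\<in>epigraph ` sublinear_minorants. M \<subseteq> X \<longrightarrow> X = M"
    using epigraph_chain_bounded by (intro Zorn_Lemma2 ballI)
  then obtain m where m: "m \<in> sublinear_minorants"
    and maximal: "\<And>q. q \<in> sublinear_minorants \<Longrightarrow> epigraph m \<subseteq> epigraph q \<Longrightarrow> epigraph q = epigraph m"
    by blast
  have "\<forall>f\<in>S. q f = m f" if "q \<in> sublinear_minorants" "\<forall>f\<in>S. q f \<le> m f" for q
  proof -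
    have "epigraph q = epigraph m"
      using maximal that by (simp add: epigraph_subset_iff)
    then have "\<forall>f\<in>S. m f \<le> q f"
      using epigraph_subset_iff[of q m] by simp
    then show ?thesis
      using that(2) by (auto intro: order_antisym)
  qed
  then show ?thesis using m by blast
qed

definition ray_inf :: "(('z \<Rightarrow> real) \<Rightarrow> real) \<Rightarrow> ('z \<Rightarrow> real) \<Rightarrow> ('z \<Rightarrow> real) \<Rightarrow> real" where
  "ray_inf m x y = Inf ((\<lambda>t. m (\<lambda>z. y z + t * x z) - t * m x) ` {0..})"

lemma ray_inf_bounds:
  fixes t :: real
  assumes m: "m \<in> sublinear_minorants" and x: "x \<in> S" and y: "y \<in> S"
  shows "bdd_below ((\<lambda>t. m (\<lambda>z. y z + t * x z) - t * m x) ` {0..})"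
    and "0 \<le> t \<Longrightarrow> ray_inf m x y \<le> m (\<lambda>z. y z + t * x z) - t * m x"
proof -
  have m_sub: "sublinear_on S m"
    using m unfolding sublinear_minorants_def by auto
  have "- m (\<lambda>z. - y z) \<le> m (\<lambda>z. y z + t * x z) - t * m x" if "0 \<le> t" for t
  proof -
    have "m (\<lambda>z. t * x z) = m (\<lambda>z. (y z + t * x z) + - y z)" by simp
    also have "\<dots> \<le> m (\<lambda>z. y z + t * x z) + m (\<lambda>z. - y z)"
      using sublinear_on_add[OF m_sub add_mem[OF y scale_mem[OF x]] uminus_mem[OF y]] .
    finally show ?thesis
      using sublinear_on_scale[OF m_sub x that] by simp
  qed
  then show bdd: "bdd_below ((\<lambda>t. m (\<lambda>z. y z + t * x z) - t * m x) ` {0..})"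
    unfolding bdd_below_def by auto
  show "ray_inf m x y \<le> m (\<lambda>z. y z + t * x z) - t * m x" if "0 \<le> t"
    unfolding ray_inf_def using that by (intro cInf_lower[OF _ bdd]) auto
qed

lemma ray_inf_sublinear_minorant:
  assumes m: "m \<in> sublinear_minorants" and x: "x \<in> S"
  shows "ray_inf m x \<in> sublinear_minorants"
proof -
  have m_sub: "sublinear_on S m" and m_le: "\<forall>f\<in>S. m f \<le> p f"
    using m unfolding sublinear_minorants_def by auto
  let ?A = "\<lambda>y. (\<lambda>t. m (\<lambda>z. y z + t * x z) - t * m x) ` {0..}"
  have yt: "(\<lambda>z. y z + t * x z) \<in> S" if "y \<in> S" for y t
    using add_mem scale_mem that x by blast
  have "sublinear_on S (ray_inf m x)"
    unfolding ray_inf_def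
  proof (rule sublinear_on_Inf)
    fix F G a b
    assume FG: "F \<in> S" "G \<in> S" and "a \<in> ?A F" "b \<in> ?A G"
    then obtain s t where st: "0 \<le> s" "a = m (\<lambda>z. F z + s * x z) - s * m x"
      "0 \<le> t" "b = m (\<lambda>z. G z + t * x z) - t * m x" by auto
    have "m (\<lambda>z. F z + G z + (s + t) * x z) = m (\<lambda>z. (F z + s * x z) + (G z + t * x z))"
      by (simp add: algebra_simps)
    also have "\<dots> \<le> m (\<lambda>z. F z + s * x z) + m (\<lambda>z. G z + t * x z)"
      using sublinear_on_add[OF m_sub yt[OF FG(1)] yt[OF FG(2)]] .
    finally show "\<exists>c\<in>?A (\<lambda>z. F z + G z). c \<le> a + b"
      using st by (intro bexI[of _ "m (\<lambda>z. F z + G z + (s + t) * x z) - (s + t) * m x"]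
        image_eqI[where x = "s + t"]) (auto simp: algebra_simps)
  next
    fix F a and t :: real
    assume "F \<in> S" "0 < t" "a \<in> ?A F"
    then obtain s where s: "0 \<le> s" "a = m (\<lambda>z. F z + s * x z) - s * m x" by auto
    have "m (\<lambda>z. t * F z + (t * s) * x z) = t * m (\<lambda>z. F z + s * x z)"
      using sublinear_on_scale[OF m_sub yt[OF \<open>F \<in> S\<close>], of t s] \<open>0 < t\<close>
      by (simp add: algebra_simps)
    then have "m (\<lambda>z. t * F z + (t * s) * x z) - (t * s) * m x = t * a"
      by (simp add: s(2) right_diff_distrib mult.assoc)
    moreover have "0 \<le> t * s"
      using s(1) \<open>0 < t\<close> by simp
    ultimately show "\<exists>c\<in>?A (\<lambda>z. t * F z). c \<le> t * a"
      by (intro bexI[of _ "t * a"] image_eqI[where x = "t * s"]) auto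
  qed (use ray_inf_bounds(1)[OF m x] in auto)
  moreover have "ray_inf m x f \<le> p f" if "f \<in> S" for f
    using ray_inf_bounds(2)[OF m x that, of 0] m_le that by fastforce
  ultimately show ?thesis
    unfolding sublinear_minorants_def by blast
qed

text \<open>A minimal \<^term>\<open>m\<close> coincides with the smaller sublinear minorant
  \<^term>\<open>ray_inf m x\<close>, whose value at \<^term>\<open>- x\<close> is at most \<^term>\<open>- m x\<close>.\<close>
lemma minimal_sublinear_minorant_uminus:
  assumes m: "m \<in> sublinear_minorants"
    and minimal: "\<forall>q\<in>sublinear_minorants. (\<forall>f\<in>S. q f \<le> m f) \<longrightarrow> (\<forall>f\<in>S. q f = m f)"
    and x: "x \<in> S"
  shows "m (\<lambda>z. - x z) = - m x"
proof -
  have m_sub: "sublinear_on S m"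
    using m unfolding sublinear_minorants_def by auto
  have "\<forall>f\<in>S. ray_inf m x f \<le> m f"
    using ray_inf_bounds(2)[OF m x, where t = 0] by simp
  then have "m (\<lambda>z. - x z) = ray_inf m x (\<lambda>z. - x z)"
    using minimal ray_inf_sublinear_minorant[OF m x] uminus_mem[OF x] by simp
  also have "\<dots> \<le> m (\<lambda>z. - x z + 1 * x z) - 1 * m x"
    using ray_inf_bounds(2)[OF m x uminus_mem[OF x], where t = 1] by simp
  also have "\<dots> = - m x"
    using sublinear_on_zero[OF m_sub] by simp
  finally show ?thesis
    using sublinear_on_uminus[OF m_sub x] by simp
qed

theorem hahn_banach: "\<exists>L. linear_on S L \<and> (\<forall>f\<in>S. L f \<le> p f)"
proof -
  obtain m where m: "m \<in> sublinear_minorants"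
    and minimal: "\<forall>q\<in>sublinear_minorants. (\<forall>f\<in>S. q f \<le> m f) \<longrightarrow> (\<forall>f\<in>S. q f = m f)"
    using minimal_sublinear_minorant_exists by blast
  have m_sub: "sublinear_on S m" and m_le: "\<forall>f\<in>S. m f \<le> p f"
    using m unfolding sublinear_minorants_def by auto
  note uminus = minimal_sublinear_minorant_uminus[OF m minimal]
  have "m (\<lambda>x. f x + g x) = m f + m g" if "f \<in> S" "g \<in> S" for f g
  proof -
    have "m (\<lambda>x. - f x + - g x) \<le> m (\<lambda>x. - f x) + m (\<lambda>x. - g x)"
      using sublinear_on_add[OF m_sub uminus_mem[OF that(1)] uminus_mem[OF that(2)]] .
    then show ?thesis
      using uminus[OF add_mem[OF that]] uminus that sublinear_on_add[OF m_sub that] by simp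
  qed
  moreover have "m (\<lambda>x. a * f x) = a * m f" if "f \<in> S" for f a
  proof (cases "0 \<le> a")
    case False
    have "m (\<lambda>x. a * f x) = m (\<lambda>x. - ((- a) * f x))" by simp
    also have "\<dots> = - ((- a) * m f)"
      using uminus[OF scale_mem[OF that]] sublinear_on_scale[OF m_sub that, of "- a"] False by simp
    finally show ?thesis by simp
  qed (use sublinear_on_scale[OF m_sub that] in simp)
  ultimately show ?thesis
    using m_le unfolding linear_on_def by blast
qed

end

section \<open>Representation of positive functionals on bounded continuous functions\<close>

definition bfun :: "('z \<Rightarrow> real) set" where
  "bfun = {f. \<exists>B. \<forall>x. \<bar>f x\<bar> \<le> B}"

lemma bfunI: "(\<And>x. \<bar>f x\<bar> \<le> B) \<Longrightarrow> f \<in> bfun"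
  unfolding bfun_def by blast

lemma Cb_imp_bfun: "f \<in> Cb \<Longrightarrow> f \<in> bfun"
  by (metis Cb_bound bfunI)

lemma indicator_bfun: "indicator A \<in> bfun"
  by (rule bfunI[where B = 1]) (simp add: indicator_def)

interpretation bfun: function_space bfun
proof
  show "(\<lambda>x. 0) \<in> bfun" by (rule bfunI[where B = 0]) simp
  show "(\<lambda>x. f x + g x) \<in> bfun" if f: "f \<in> bfun" and g: "g \<in> bfun" for f g :: "'z \<Rightarrow> real"
  proof -
    obtain A B where "\<And>x. \<bar>f x\<bar> \<le> A" "\<And>x. \<bar>g x\<bar> \<le> B"
      using f g unfolding bfun_def by blast
    then show ?thesis
      by (intro bfunI[where B = "A + B"]) (meson abs_triangle_ineq add_mono order_trans)
  qed
  show "(\<lambda>x. a * f x) \<in> bfun" if f: "f \<in> bfun" for f :: "'z \<Rightarrow> real" and a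
  proof -
    obtain B where "\<And>x. \<bar>f x\<bar> \<le> B"
      using f unfolding bfun_def by blast
    then show ?thesis
      by (intro bfunI[where B = "\<bar>a\<bar> * B"]) (simp add: abs_mult mult_left_mono)
  qed
qed

lemma simple_fun_bfun: "simple_fun s \<in> bfun"
proof (induction s)
  case Nil
  then show ?case using bfun.zero_mem by (simp add: simple_fun_def)
next
  case (Cons p s)
  then show ?case
    using bfun.add_mem[OF bfun.scale_mem[OF indicator_bfun]] by (simp add: simple_fun_def)
qed

interpretation Cb: function_space Cb
  by standard (simp_all add: Cb_add Cb_scale)

locale positive_functional =
  fixes L :: "('z::topological_space \<Rightarrow> real) \<Rightarrow> real"
  assumes L_linear: "linear_on Cb L"
    and L_nonneg: "f \<in> Cb \<Longrightarrow> (\<And>x. 0 \<le> f x) \<Longrightarrow> 0 \<le> L f"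
    and L_one: "L (\<lambda>x. 1) = 1"
begin

lemma L_const: "L (\<lambda>x. c) = c"
  using linear_on_scale[OF L_linear Cb_const[of 1], of c] L_one by simp

lemma L_add: "f \<in> Cb \<Longrightarrow> g \<in> Cb \<Longrightarrow> L (\<lambda>x. f x + g x) = L f + L g"
  and L_scale: "f \<in> Cb \<Longrightarrow> L (\<lambda>x. a * f x) = a * L f"
  using L_linear by (simp_all add: linear_on_add linear_on_scale)

lemma L_diff: "f \<in> Cb \<Longrightarrow> g \<in> Cb \<Longrightarrow> L (\<lambda>x. f x - g x) = L f - L g"
  using L_add[OF _ Cb_minus, of f g] Cb.linear_on_uminus[OF L_linear, of g] by simp

lemma L_mono: "f \<in> Cb \<Longrightarrow> g \<in> Cb \<Longrightarrow> (\<And>x. f x \<le> g x) \<Longrightarrow> L f \<le> L g"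
  using L_nonneg[OF Cb_diff, of g f] L_diff[of g f] by simp

definition outer_mass :: "'z set \<Rightarrow> real" where
  "outer_mass Z = Inf (L ` {g \<in> Cb. \<forall>x. indicator Z x \<le> g x})"

lemma outer_mass_bdd_below: "bdd_below (L ` {g \<in> Cb. \<forall>x. indicator Z x \<le> g x})"
  unfolding bdd_below_def
  by (rule exI[where x = 0]) (auto intro!: L_nonneg intro: order_trans[OF indicator_pos_le])

lemma outer_mass_le: "g \<in> Cb \<Longrightarrow> (\<And>x. indicator Z x \<le> g x) \<Longrightarrow> outer_mass Z \<le> L g"
  unfolding outer_mass_def using outer_mass_bdd_below by (intro cInf_lower) auto

lemma outer_mass_less:
  assumes "outer_mass Z < y"
  obtains g where "g \<in> Cb" "\<And>x. indicator Z x \<le> g x" "L g < y"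
proof -
  have "L (\<lambda>x. 1) \<in> L ` {g \<in> Cb. \<forall>x. indicator Z x \<le> g x}"
    by (intro imageI) (simp add: indicator_def)
  then have "L ` {g \<in> Cb. \<forall>x. indicator Z x \<le> g x} \<noteq> {}"
    by blast
  then show ?thesis
    using assms that cInf_less_iff[OF _ outer_mass_bdd_below] unfolding outer_mass_def
    by blast
qed

definition pos_zero_set_list :: "(real \<times> 'z set) list \<Rightarrow> bool" where
  "pos_zero_set_list ts \<longleftrightarrow> (\<forall>p\<in>set ts. 0 \<le> fst p \<and> snd p \<in> zero_sets)"

lemma pos_zero_set_list_simps [simp]:
  "pos_zero_set_list []"
  "pos_zero_set_list (p # ts) \<longleftrightarrow> 0 \<le> fst p \<and> snd p \<in> zero_sets \<and> pos_zero_set_list ts"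
  "pos_zero_set_list (ts @ ts') \<longleftrightarrow> pos_zero_set_list ts \<and> pos_zero_set_list ts'"
  by (auto simp: pos_zero_set_list_def)

lemma pos_zero_set_list_scale:
  "0 \<le> a \<Longrightarrow> pos_zero_set_list ts \<Longrightarrow> pos_zero_set_list (map (\<lambda>p. (a * fst p, snd p)) ts)"
  by (auto simp: pos_zero_set_list_def)

lemma zero_sets_diff_simple_fun_le:
  assumes "g \<in> Cb" "pos_zero_set_list ts"
  shows "{x. g x - simple_fun ts x \<le> c} \<in> zero_sets"
  using assms(2)
proof (induction ts arbitrary: c)
  case Nil
  then show ?case using zero_sets_le[OF assms(1)] by simp
next
  case (Cons p ts)
  obtain t Z where p: "p = (t, Z)" by (cases p)
  have "{x. g x - simple_fun (p # ts) x \<le> c}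
      = (Z \<inter> {x. g x - simple_fun ts x \<le> c + t}) \<union> {x. g x - simple_fun ts x \<le> c}"
    using Cons.prems by (auto simp: p indicator_def)
  then show ?case
    using Cons p by (simp add: zero_sets_Int zero_sets_Un)
qed

text \<open>A function of \<^term>\<open>Cb\<close> separates \<^term>\<open>Z\<close> from the zero-set where the rest of
  the list nearly exhausts \<^term>\<open>g\<close>; subtracting \<^term>\<open>t\<close> times it from \<^term>\<open>g\<close> removes
  the term of \<^term>\<open>Z\<close> at the price of its outer mass.\<close>
lemma drop_zero_set_term:
  assumes t: "0 \<le> t" and Z: "Z \<in> zero_sets" and ts: "pos_zero_set_list ts" and g: "g \<in> Cb"
    and ge: "\<And>x. t * indicator Z x + simple_fun ts x \<le> g x" and "0 < e"
  obtains g' where "g' \<in> Cb" "\<And>x. simple_fun ts x \<le> g' x" "L g' + t * outer_mass Z \<le> L g + e"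
proof -
  define C where "C = {x. g x - simple_fun ts x \<le> t - e}"
  have "C \<in> zero_sets"
    unfolding C_def by (rule zero_sets_diff_simple_fun_le[OF g ts])
  moreover have "Z \<inter> C = {}"
  proof -
    have "x \<notin> C" if "x \<in> Z" for x
      using ge[of x] that \<open>0 < e\<close> by (simp add: C_def)
    then show ?thesis by blast
  qed
  ultimately obtain s where s: "s \<in> Cb" "\<And>x. 0 \<le> s x" "\<And>x. s x \<le> 1"
    "\<And>x. x \<in> Z \<Longrightarrow> s x = 1" "\<And>x. x \<in> C \<Longrightarrow> s x = 0"
    using zero_sets_separation[OF Z] by metis
  define g' where "g' x = g x - t * s x + e" for x
  have "g' \<in> Cb"
    unfolding g'_def using g s(1) by (intro Cb_add Cb_diff Cb_scale Cb_const)
  moreover have "simple_fun ts x \<le> g' x" for x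
  proof (cases "x \<in> C")
    case True
    have "0 \<le> t * indicator Z x"
      using t by simp
    then show ?thesis
      using True ge[of x] s(5) \<open>0 < e\<close> by (simp add: g'_def)
  next
    case False
    have "t * s x \<le> t"
      using s(3)[of x] t by (simp add: mult_left_le)
    then show ?thesis
      using False by (simp add: g'_def C_def)
  qed
  moreover have "L g' = L g - t * L s + e"
    unfolding g'_def using L_add[OF Cb_diff[OF g Cb_scale[OF s(1)]] Cb_const]
      L_diff[OF g Cb_scale[OF s(1)]] L_scale[OF s(1)] L_const by simp
  moreover have "t * outer_mass Z \<le> t * L s"
    using t s by (intro mult_left_mono outer_mass_le) (auto simp: indicator_def)
  ultimately show ?thesis
    using that by force
qed

lemma simple_sum_outer_mass_le:
  "pos_zero_set_list ts \<Longrightarrow> g \<in> Cb \<Longrightarrow> (\<And>x. simple_fun ts x \<le> g x)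
    \<Longrightarrow> simple_sum outer_mass ts \<le> L g"
proof (induction ts arbitrary: g)
  case Nil
  then show ?case by (auto intro: L_nonneg)
next
  case (Cons p ts)
  obtain t Z where p: "p = (t, Z)" by (cases p)
  have t: "0 \<le> t" and Z: "Z \<in> zero_sets" and ts: "pos_zero_set_list ts"
    using Cons.prems p by auto
  have g: "g \<in> Cb" and ge: "t * indicator Z x + simple_fun ts x \<le> g x" for x
    using Cons.prems(2) Cons.prems(3)[of x] p by auto
  show ?case
  proof (rule field_le_epsilon)
    fix e :: real
    assume "0 < e"
    then obtain g' where "g' \<in> Cb" "\<And>x. simple_fun ts x \<le> g' x"
      and "L g' + t * outer_mass Z \<le> L g + e"
      using drop_zero_set_term[OF t Z ts g ge] by metis
    moreover have "simple_sum outer_mass ts \<le> L g'"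
      using Cons.IH[OF ts] calculation by blast
    ultimately show "simple_sum outer_mass (p # ts) \<le> L g + e"
      using p by simp
  qed
qed

text \<open>Any linear extension of \<^term>\<open>L\<close> to bounded functions that exceeds the outer mass on
  indicators of zero-sets lies below \<open>majorant\<close>.\<close>

definition majorant_vals :: "('z \<Rightarrow> real) \<Rightarrow> real set" where
  "majorant_vals F = {L g - simple_sum outer_mass ts | g ts.
      g \<in> Cb \<and> pos_zero_set_list ts \<and> (\<forall>x. F x + simple_fun ts x \<le> g x)}"

definition majorant :: "('z \<Rightarrow> real) \<Rightarrow> real" where
  "majorant F = Inf (majorant_vals F)"

lemma majorant_valsI:
  "g \<in> Cb \<Longrightarrow> pos_zero_set_list ts \<Longrightarrow> (\<And>x. F x + simple_fun ts x \<le> g x)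
    \<Longrightarrow> L g - simple_sum outer_mass ts \<in> majorant_vals F"
  unfolding majorant_vals_def by blast

lemma majorant_valsE:
  assumes "v \<in> majorant_vals F"
  obtains g ts where "v = L g - simple_sum outer_mass ts" "g \<in> Cb" "pos_zero_set_list ts"
    "\<And>x. F x + simple_fun ts x \<le> g x"
  using assms unfolding majorant_vals_def mem_Collect_eq
  by (elim exE conjE) (rule that, assumption+, blast)

lemma majorant_vals_lower:
  assumes
 M: "\<And>x. \<bar>F x\<bar> \<le> M" and v: "v \<in> majorant_vals F"
  shows "- M \<le> v"
proof -
  obtain g ts where v: "v = L g - simple_sum outer_mass ts" and g: "g \<in> Cb"
    and ts: "pos_zero_set_list ts" and le: "\<And>x. F x + simple_fun ts x \<le> g x"
    using majorant_valsE[OF v] by metis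
  have "simple_fun ts x \<le> g x + M" for x
    using le[of x] M[of x] by (simp add: abs_le_iff)
  then have "simple_sum outer_mass ts \<le> L (\<lambda>x. g x + M)"
    by (rule simple_sum_outer_mass_le[OF ts Cb_add[OF g Cb_const]])
  also have "\<dots> = L g + M"
    using L_add[OF g Cb_const] L_const by simp
  finally show ?thesis
    using v by simp
qed

lemma majorant_vals_bounds:
  assumes "F \<in> bfun"
  shows "majorant_vals F \<noteq> {}" "bdd_below (majorant_vals F)"
proof -
  obtain M where M: "\<And>x. \<bar>F x\<bar> \<le> M"
    using assms unfolding bfun_def by blast

  have "F x + simple_fun [] x \<le> M" for x
    using M[of x] by (simp add: abs_le_iff)
  then have "L (\<lambda>x. M) - simple_sum outer_mass [] \<in> majorant_vals F"
    by (rule majorant_valsI[OF Cb_const pos_zero_set_list_simps(1)])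
  then show "majorant_vals F \<noteq> {}"
    by blast
  show "bdd_below (majorant_vals F)"
    using majorant_vals_lower[OF M] by (rule bdd_belowI)
qed

lemma majorant_le:
  assumes "F \<in> bfun" "g \<in> Cb" "pos_zero_set_list ts" "\<And>x. F x + simple_fun ts x \<le> g x"
  shows "majorant F \<le> L g - simple_sum outer_mass ts"
  unfolding majorant_def
  by (rule cInf_lower[OF majorant_valsI[OF assms(2-4)] majorant_vals_bounds(2)[OF assms(1)]])

lemma sublinear_majorant: "sublinear_on bfun majorant"
  unfolding majorant_def
proof (rule bfun.sublinear_on_Inf)
  fix F G a b
  assume "a \<in> majorant_vals F" "b \<in> majorant_vals G"
  then obtain g ts g' ts' where
    a: "a = L g - simple_sum outer_mass ts" "g \<in> Cb" "pos_zero_set_list ts"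
      "\<And>x. F x + simple_fun ts x \<le> g x" and
    b: "b = L g' - simple_sum outer_mass ts'" "g' \<in> Cb" "pos_zero_set_list ts'"
      "\<And>x. G x + simple_fun ts' x \<le> g' x"
    unfolding majorant_vals_def by blast
  have "F x + G x + simple_fun (ts @ ts') x \<le> g x + g' x" for x
    using a(4)[of x] b(4)[of x] unfolding simple_fun_append by linarith
  then have "L (\<lambda>x. g x + g' x) - simple_sum outer_mass (ts @ ts') \<in> majorant_vals (\<lambda>x. F x + G x)"
    using a b by (intro majorant_valsI Cb_add) auto
  moreover have "L (\<lambda>x. g x + g' x) - simple_sum outer_mass (ts @ ts') = a + b"
    using a b L_add[OF a(2) b(2)] by (simp add: simple_sum_append)
  ultimately show "\<exists>c\<in>majorant_vals (\<lambda>x. F x + G x). c \<le> a + b"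
    by force
next
  fix F a and t :: real
  assume "0 < t" "a \<in> majorant_vals F"
  then obtain g ts where
    a: "a = L g - simple_sum outer_mass ts" "g \<in> Cb" "pos_zero_set_list ts"
      "\<And>x. F x + simple_fun ts x \<le> g x"
    unfolding majorant_vals_def by blast
  let ?ts = "map (\<lambda>p. (t * fst p, snd p)) ts"
  have "t * F x + simple_fun ?ts x \<le> t * g x" for x
    using mult_left_mono[OF a(4)[of x]] \<open>0 < t\<close> by (simp add: simple_fun_scale algebra_simps)
  then have "L (\<lambda>x. t * g x) - simple_sum outer_mass ?ts \<in> majorant_vals (\<lambda>x. t * F x)"
    using a \<open>0 < t\<close> by (intro majorant_valsI Cb_scale pos_zero_set_list_scale) auto
  moreover have "L (\<lambda>x. t * g x) - simple_sum outer_mass ?ts = t * a"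
    using a L_scale[OF a(2)] by (simp add: simple_sum_scale right_diff_distrib)
  ultimately show "\<exists>c\<in>majorant_vals (\<lambda>x. t * F x). c \<le> t * a"
    by force
qed (use majorant_vals_bounds in auto)

lemma linear_extension_below_majorant: "\<exists>Lt. linear_on bfun Lt \<and> (\<forall>F\<in>bfun. Lt F \<le> majorant F)"
proof -
  interpret sublinear_functional bfun majorant
    by standard (rule sublinear_majorant)
  show ?thesis by (rule hahn_banach)
qed

end

locale positive_functional_extension =
  positive_functional L for L :: "('z::topological_space \<Rightarrow> real) \<Rightarrow> real" +
  fixes Lt
 :: "('z \<Rightarrow> real) \<Rightarrow> real"
  assumes Lt_linear: "linear_on bfun Lt"
    and Lt_le_majorant: "F \<in> bfun \<Longrightarrow> Lt F \<le> majorant F"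
begin

lemma Lt_add: "F \<in> bfun \<Longrightarrow> G \<in> bfun \<Longrightarrow> Lt (\<lambda>x. F x + G x) = Lt F + Lt G"
  and Lt_scale: "F \<in> bfun \<Longrightarrow> Lt (\<lambda>x. a * F x) = a * Lt F"
  and Lt_uminus: "F \<in> bfun \<Longrightarrow> Lt (\<lambda>x. - F x) = - Lt F"
  using Lt_linear by (simp_all add: linear_on_add linear_on_scale bfun.linear_on_uminus)

lemma Lt_diff: "F \<in> bfun \<Longrightarrow> G \<in> bfun \<Longrightarrow> Lt (\<lambda>x. F x - G x) = Lt F - Lt G"
  using Lt_add[OF _ bfun.uminus_mem, of F G] Lt_uminus[of G] by simp

lemma Lt_le_L:
  assumes "g \<in> Cb"
  shows "Lt g \<le> L g"
proof -
  have "Lt g \<le> majorant g"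
    by (rule Lt_le_majorant[OF Cb_imp_bfun[OF assms]])
  also have "\<dots> \<le> L g - simple_sum outer_mass []"
    by (rule majorant_le[OF Cb_imp_bfun[OF assms] assms]) simp_all
  finally show ?thesis by simp
qed

lemma Lt_eq_L:
  assumes "g \<in> Cb"
  shows "Lt g = L g"
proof -
  have "- Lt g \<le> - L g"
    using Lt_le_L[OF Cb_minus[OF assms]] Lt_uminus[OF Cb_imp_bfun[OF assms]]
      L_scale[OF assms, of "-1"] by simp
  then show ?thesis
    using Lt_le_L[OF assms] by simp
qed

lemma Lt_const: "Lt (\<lambda>x. c) = c"
  using Lt_eq_L[OF Cb_const] L_const by simp

lemma Lt_mono:
  assumes "F \<in> bfun" "G \<in> bfun" "\<And>x. F x \<le> G x"
  shows "Lt F \<le> Lt G"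
proof -
  have FG: "(\<lambda>x. F x - G x) \<in> bfun"
    using bfun.add_mem[OF assms(1) bfun.uminus_mem[OF assms(2)]] by simp
  have "Lt (\<lambda>x. F x - G x) \<le> majorant (\<lambda>x. F x - G x)"
    using Lt_le_majorant[OF FG] .
  also have "\<dots> \<le> L (\<lambda>x. 0) - simple_sum outer_mass []"
    using assms(3) by (intro majorant_le[OF FG]) auto
  finally show ?thesis
    using Lt_diff[OF assms(1,2)] L_const by simp
qed

lemma Lt_dist:
  assumes "F \<in> bfun" "G \<in> bfun" "\<And>x. \<bar>F x - G x\<bar> \<le> e"
  shows "\<bar>Lt F - Lt G\<bar> \<le> e"
proof -
  have e: "(\<lambda>x. e) \<in> bfun"
    by (rule bfunI[where B = "\<bar>e\<bar>"]) simp

  have FG: "F x \<le> G x + e" and GF: "G x \<le> F x + e" for x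
    using abs_le_D1[OF assms(3)[of x]] abs_le_D2[OF assms(3)[of x]] by linarith+
  have "Lt F \<le> Lt (\<lambda>x. G x + e)" "Lt G \<le> Lt (\<lambda>x. F x + e)"
    using Lt_mono[OF assms(1) bfun.add_mem[OF assms(2) e] FG]
      Lt_mono[OF assms(2) bfun.add_mem[OF assms(1) e] GF] by simp_all
  then show ?thesis
    using Lt_add
[OF assms(1) e] Lt_add[OF assms(2) e] Lt_const by (simp add: abs_le_iff)
qed

lemma outer_mass_le_Lt:
  assumes "Z \<in> zero_sets"
  shows "outer_mass Z \<le> Lt (indicator Z)"
proof -
  have "Lt (\<lambda>x. - indicator Z x) \<le> majorant (\<lambda>x. - indicator Z x)"
    using Lt_le_majorant bfun.uminus_mem[OF indicator_bfun] by blast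
  also have "\<dots> \<le> L (\<lambda>x. 0) - simple_sum outer_mass [(1, Z)]"
    using assms by (intro majorant_le bfun.uminus_mem[OF indicator_bfun]) auto
  finally show ?thesis
    using Lt_uminus[OF indicator_bfun] L_const by simp
qed

definition induced_measure :: "'z set \<Rightarrow> real" where
  "induced_measure A = Lt (indicator A)"

lemma induced_measure_nonneg: "0 \<le> induced_measure A"
  using Lt_mono[OF bfun.zero_mem indicator_bfun, of A] Lt_const[of 0]
  by (simp add: induced_measure_def)

lemma induced_measure_UNIV: "induced_measure UNIV = 1"
  using Lt_const[of 1] by (simp add: induced_measure_def)

lemma induced_measure_Un:
  assumes "A \<inter> B = {}"
  shows "induced_measure (A \<union> B) = induced_measure A + induced_measure B"
proof -
  have "indicator (A \<union> B) = (\<lambda>x. indicator A x + indicator B x :: real)"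
    using indicator_disj_union[OF assms] by (rule ext)
  then show ?thesis
    using Lt_add[OF indicator_bfun indicator_bfun, of A B] by (simp add: induced_measure_def)
qed

lemma induced_measure_mono: "A \<subseteq> B \<Longrightarrow> induced_measure A \<le> induced_measure B"
  unfolding induced_measure_def
  by (intro Lt_mono indicator_bfun) (auto simp: indicator_def)

lemma induced_measure_subadditive:
  assumes "C \<subseteq> A \<union> B"
  shows "induced_measure C \<le> induced_measure A + induced_measure B"
proof -
  have "induced_measure C \<le> Lt (\<lambda>x. indicator A x + indicator B x)"
    unfolding induced_measure_def using assms
    by (intro Lt_mono indicator_bfun bfun.add_mem) (auto simp: indicator_def)
  then show ?thesis
    using Lt_add[OF indicator_bfun indicator_bfun] by (simp add: induced_measure_def)
qed

definition zero_set_regular :: "'z set \<Rightarrow> bool" where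
  "zero_set_regular A \<longleftrightarrow> (\<forall>e>0. \<exists>F U. F \<in> zero_sets \<and> - U \<in> zero_sets \<and> F \<subseteq> A \<and> A \<subseteq> U
      \<and> induced_measure (U - F) < e)"

lemma superlevel_set_cover:
  assumes h: "h \<in> Cb" "\<And>x. indicator Z x \<le> h x" "\<And>x. h x \<le> 1" and "0 < \<eta>"
  defines "U \<equiv> {x. 1 < (1 + \<eta>) * h x}"
  shows "- U \<in> zero_sets" "Z \<subseteq> U" "induced_measure U \<le> (1 + \<eta>) * L h"
proof -
  have "- U = {x. (1 + \<eta>) * h x \<le> 1}"
    by (auto simp: U_def)
  then show "- U \<in> zero_sets"
    using zero_sets_le[OF Cb_scale[OF h(1)]] by simp
  show "Z \<subseteq> U"
  proof
    fix x
    assume "x \<in> Z"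
    then have "h x = 1"
      using h(2)[of x] h(3)[of x] by simp
    then show "x \<in> U"
      using \<open>0 < \<eta>\<close> by (simp add: U_def)
  qed
  have "0 \<le> h x" for x
    using order_trans[OF indicator_pos_le h(2)] .
  then have "indicator U x \<le> (1 + \<eta>) * h x" for x
    using \<open>0 < \<eta>\<close> by (cases "x \<in> U") (auto simp: U_def)
  then have "induced_measure U \<le> Lt (\<lambda>x. (1 + \<eta>) * h x)"
    unfolding induced_measure_def
    by (intro Lt_mono indicator_bfun bfun.scale_mem Cb_imp_bfun[OF h(1)])
  also have "\<dots> = (1 + \<eta>) * L h"
    using Lt_scale[OF Cb_imp_bfun[OF h(1)]] Lt_eq_L[OF h(1)] by simp
  finally show "induced_measure U \<le> (1 + \<eta>) * L h" .
qed

text \<open>The outer neighbourhood of a zero-set is a strict superlevel set of a nearly optimal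
  majorant of its indicator, capped at 1.\<close>
lemma zero_set_regular_zero_set:
  assumes Z: "Z \<in> zero_sets"
  shows "zero_set_regular Z"
  unfolding zero_set_regular_def
proof (intro allI impI)
  fix e :: real
  assume "0 < e"
  define \<eta> where "\<eta> = e / 3"
  have "0 < \<eta>" using \<open>0 < e\<close> by (simp add: \<eta>_def)
  obtain g where g: "g \<in> Cb" "\<And>x. indicator Z x \<le> g x" "L g < outer_mass Z + \<eta>"
    using outer_mass_less[of Z "outer_mass Z + \<eta>"] \<open>0 < \<eta>\<close> by auto
  define h where "h x = min (g x) 1" for x
  have h: "h \<in> Cb" "\<And>x. indicator Z x \<le> h x" "\<And>x. h x \<le> 1"
    unfolding h_def using Cb_min[OF g(1) Cb_const] g(2) by (auto simp: indicator_def)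
  have "L h \<le> L g"
    using L_mono[OF h(1) g(1)] by (simp add: h_def)
  have "L h \<le> 1"
    using L_mono[OF h(1) Cb_const h(3)] L_const by simp
  define U where "U = {x. 1 < (1 + \<eta>) * h x}"
  note U = superlevel_set_cover[OF h \<open>0 < \<eta>\<close>, folded U_def]
  have "induced_measure U = induced_measure (U - Z) + induced_measure Z"
    using induced_measure_Un[of "U - Z" Z] U(2) by (simp add: Int_commute Un_absorb2)
  moreover have "outer_mass Z \<le> induced_measure Z"
    using outer_mass_le_Lt[OF Z] by (simp add: induced_measure_def)
  moreover have "\<eta> * L h \<le> \<eta>"
    using \<open>L h \<le> 1\<close> \<open>0 < \<eta>\<close> by (simp add: mult_left_le)
  moreover have "(1 + \<eta>) * L h = L h + \<eta> * L h" "e = 3 * \<eta>"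
    by (simp_all add: \<eta>_def algebra_simps)
  ultimately have "induced_measure (U - Z) < e"
    using U(3) g(3) \<open>L h \<le> L g\<close> \<open>0 < \<eta>\<close> by linarith
  then show "\<exists>F U. F \<in> zero_sets \<and> - U \<in> zero_sets \<and> F \<subseteq> Z \<and> Z \<subseteq> U
      \<and> induced_measure (U - F) < e"
    using Z U(1,2) by blast
qed

lemma zero_set_regular_zalg: "A \<in> zalg \<Longrightarrow> zero_set_regular A"
proof (induction rule: zalg.induct)
  case (zalg_zero Z)
  then show ?case by (rule zero_set_regular_zero_set)
next
  case (zalg_compl A)
  show ?case
    unfolding zero_set_regular_def
  proof (intro allI impI)
    fix e :: real
    assume "0 < e"
    then obtain F U where "F \<in> zero_sets" "- U \<in> zero_sets" "F \<subseteq> A" "A \<subseteq> U"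
      "induced_measure (U - F) < e"
      using zalg_compl.IH unfolding zero_set_regular_def by blast
    moreover have "- F - - U = U - F" by blast
    ultimately show "\<exists>F' U'. F' \<in> zero_sets \<and> - U' \<in> zero_sets \<and> F' \<subseteq> - A \<and> - A \<subseteq> U'
        \<and> induced_measure (U' - F') < e"
      by (intro exI[where x = "- U"] exI[where x = "- F"]) auto
  qed
next
  case (zalg_union A B)
  show ?case
    unfolding zero_set_regular_def
  proof (intro allI impI)
    fix e :: real
    assume "0 < e"
    then obtain F U F' U' where FU: "F \<in> zero_sets" "- U \<in> zero_sets" "F \<subseteq> A" "A \<subseteq> U"
      "induced_measure (U - F) < e / 2"
      and FU': "F' \<in> zero_sets" "- U' \<in> zero_sets" "F' \<subseteq> B" "B \<subseteq> U'"
      "induced_measure (U' - F') < e / 2"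
      using zalg_union.IH half_gt_zero unfolding zero_set_regular_def by metis
    have "induced_measure ((U \<union> U') - (F \<union> F')) \<le> induced_measure (U - F) + induced_measure (U' - F')"
      by (rule induced_measure_subadditive) blast
    moreover have "- (U \<union> U') \<in> zero_sets" "F \<union> F' \<in> zero_sets"
      using zero_sets_Int[OF FU(2) FU'(2)] zero_sets_Un[OF FU(1) FU'(1)] by simp_all
    ultimately show "\<exists>F U. F \<in> zero_sets \<and> - U \<in> zero_sets \<and> F \<subseteq> A \<union> B \<and> A \<union> B \<subseteq> U
        \<and> induced_measure (U - F) < e"
      using FU FU' by (intro exI[where x = "F \<union> F'"] exI[where x = "U \<union> U'"]) auto
  qed
qed

lemma induced_measure_M1: "induced_measure \<in> M1"
proof -
  have "\<exists>F\<in>zero_sets. F \<subseteq> A \<and> induced_measure (A - F) < e" if "A \<in> zalg" "0 < e" for A e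
  proof -
    obtain F U where FU: "F \<in> zero_sets" "F \<subseteq> A" "A \<subseteq> U" "induced_measure (U - F) < e"
      using zero_set_regular_zalg[OF \<open>A \<in> zalg\<close>] \<open>0 < e\<close> unfolding zero_set_regular_def by blast
    moreover have "induced_measure (A - F) \<le> induced_measure (U - F)"
      using FU(3) by (intro induced_measure_mono) blast
    ultimately show ?thesis
      by (intro bexI[of _ F]) simp_all
  qed
  then show ?thesis
    unfolding M1_def
    by (simp add: induced_measure_nonneg induced_measure_Un induced_measure_UNIV)
qed

lemma simple_sum_induced_measure
: "simple_sum induced_measure s = Lt (simple_fun s)"
proof (induction s)
  case Nil
  then show ?case using Lt_const[of 0] by (simp add: simple_fun_def)
next
  case (Cons p s)
  have "simple_fun (p # s) = (\<lambda>x. fst p * indicator (snd p) x + simple_fun s x)"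
    by (rule ext) simp
  then have "Lt (simple_fun (p # s)) = Lt (\<lambda>x. fst p * indicator (snd p) x + simple_fun s x)"
    by simp
  also have "\<dots> = fst p * induced_measure (snd p) + Lt (simple_fun s)"
    using Lt_add[OF bfun.scale_mem[OF indicator_bfun] simple_fun_bfun]
      Lt_scale[OF indicator_bfun] by (simp add: induced_measure_def)
  finally show ?case
    using Cons.IH by (simp only: simple_sum_Cons)

qed

lemma fa_integral_induced_measure:
  assumes "F \<in> Cb"
  shows "fa_integral induced_measure F = L F"
proof (rule fa_integral_eqI[OF assms])
  fix s e
  assume "\<And>x. \<bar>F x - simple_fun s x\<bar> \<le> e"
  then have "\<bar>Lt F - Lt (simple_fun s)\<bar> \<le> e"
    by (intro Lt_dist simple_fun_bfun Cb_imp_bfun[OF assms])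

  then show "\<bar>L F - simple_sum induced_measure s\<bar> \<le> e"
    using Lt_eq_L[OF assms] by (simp add: simple_sum_induced_measure)
qed

end

theorem (in positive_functional) positive_functional_representation:
  "\<exists>\<gamma>\<in>M1. \<forall>F\<in>Cb. fa_integral \<gamma> F = L F"
proof -
  obtain Lt where "linear_on bfun Lt" "\<forall>F\<in>bfun. Lt F \<le> majorant F"
    using linear_extension_below_majorant by blast
  then interpret positive_functional_extension L Lt
    by unfold_locales auto
  show ?thesis
    using induced_measure_M1 fa_integral_induced_measure by blast
qed

section \<open>Kantorovich duality with attainment\<close>

lemma baire_prob_space: "baire_prob \<mu> \<Longrightarrow> prob_space \<mu>"
  by (simp add: baire_prob_def)

lemma Cb_borel_measurable:
  assumes "baire_prob \<mu>" "f \<in> Cb"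
  shows "f \<in> borel_measurable \<mu>"
proof (rule borel_measurableI_le)
  fix y
  have "{x. f x \<le> y} \<in> baire_sets"
    unfolding baire_sets_def by (rule sigma_sets.Basic[OF zero_sets_le[OF assms(2)]])
  then show "{x \<in> space \<mu>. f x \<le> y} \<in> sets \<mu>"
    using assms(1) by (simp add: baire_prob_def)
qed

lemma Cb_integrable:
  assumes "baire_prob \<mu>" "f \<in> Cb"
  shows "integrable \<mu> f"
proof -
  interpret prob_space \<mu>
    using assms(1) by (rule baire_prob_space)
  obtain B where "\<And>x. \<bar>f x\<bar> \<le> B"
    using Cb_bound[OF assms(2)] by metis
  then show ?thesis
    by (intro integrable_const_bound[where B = B] Cb_borel_measurable[OF assms]) auto
qed

lemma baire_integral_const:
  assumes "baire_prob \<mu>"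
  shows "(\<integral>x. c \<partial>\<mu>) = (c :: real)"
  using prob_space.prob_space[OF baire_prob_space[OF assms]] by simp

lemma baire_integral_add:
  "baire_prob \<mu> \<Longrightarrow> f \<in> Cb \<Longrightarrow> g \<in> Cb \<Longrightarrow> (\<integral>x. f x + g x \<partial>\<mu>) = integral\<^sup>L \<mu> f + integral\<^sup>L \<mu> g"
  by (intro Bochner_Integration.integral_add Cb_integrable)

lemma baire_integral_ge_const:
  "baire_prob \<mu> \<Longrightarrow> f \<in> Cb \<Longrightarrow> (\<And>x. c \<le> f x) \<Longrightarrow> c \<le> integral\<^sup>L \<mu> f"
  by (intro prob_space.integral_ge_const baire_prob_space Cb_integrable AE_I2)

lemma oplus_apply: "oplus \<phi> \<psi> z = \<phi> (fst z) + \<psi> (snd z)"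
  by (cases z) (simp add: oplus_def)

lemma oplus_Cb:
  assumes "\<phi> \<in> Cb" "\<psi> \<in> Cb"
  shows "oplus \<phi> \<psi> \<in> Cb"
proof -
  obtain A B where A: "\<And>x. \<bar>\<phi> x\<bar> \<le> A" and B: "\<And>y. \<bar>\<psi> y\<bar> \<le> B"
    using assms Cb_bound by metis
  have "\<bar>oplus \<phi> \<psi> z\<bar> \<le> A + B" for z
    using abs_triangle_ineq[of "\<phi> (fst z)" "\<psi> (snd z)"] A[of "fst z"] B[of "snd z"]
    unfolding oplus_apply by linarith
  moreover have "continuous_on UNIV (\<lambda>z. \<phi> (fst z))" "continuous_on UNIV (\<lambda>z. \<psi> (snd z))"
    using continuous_on_compose2[OF Cb_continuous[OF assms(1)] continuous_on_fst[OF continuous_on_id]]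
      continuous_on_compose2[OF Cb_continuous[OF assms(2)] continuous_on_snd[OF continuous_on_id]]
    by simp_all
  then have "continuous_on UNIV (oplus \<phi> \<psi>)"
    unfolding oplus_apply[abs_def] by (rule continuous_on_add)
  ultimately show ?thesis
    by (rule CbI[rotated])
qed

lemma integral_oplus_ge_const:
  assumes \<mu>: "baire_prob \<mu>" and \<nu>: "baire_prob \<nu>" and "\<phi> \<in> Cb" "\<psi> \<in> Cb"
    and ge: "\<And>x y. c \<le> \<phi> x + \<psi> y"
  shows "c \<le> integral\<^sup>L \<mu> \<phi> + integral\<^sup>L \<nu> \<psi>"
proof -
  obtain B where B: "\<And>y. \<bar>\<psi> y\<bar> \<le> B"
    using Cb_bound[OF \<open>\<psi> \<in> Cb\<close>] by metis
  have "- B \<le> \<psi> y" for y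
    using abs_le_D2[OF B[of y]] by simp

  then have bdd: "bdd_below (range \<psi>)"
    by (intro bdd_belowI[where m = "- B"]) auto

  define m where "m = Inf (range \<psi>)"
  have "c - m \<le> \<phi> x" for x
  proof -
    have "c - \<phi> x \<le> m"
      unfolding m_def using ge[of x] by (intro cInf_greatest) (auto simp: algebra_simps)
    then show ?thesis by simp
  qed
  then have "c - m \<le> integral\<^sup>L \<mu> \<phi>"
    by (rule baire_integral_ge_const[OF \<mu> \<open>\<phi> \<in> Cb\<close>])
  moreover have "m \<le> integral\<^sup>L \<nu> \<psi>"
    using bdd by (intro baire_integral_ge_const[OF \<nu> \<open>\<psi> \<in> Cb\<close>]) (simp add: m_def cInf_lower)
  ultimately show ?thesis by simp
qed

lemma weak_duality:
  assumes "\<gamma> \<in> Gamma \<mu> \<nu>" "DP_admissible c \<phi> \<psi>"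
  shows "ereal (integral\<^sup>L \<mu> \<phi> + integral\<^sup>L \<nu> \<psi>) \<le> lsc_integral \<gamma> c"
proof -
  have "\<phi> \<in> Cb" "\<psi> \<in> Cb" "\<forall>z. ereal (oplus \<phi> \<psi> z) \<le> c z"
    using assms(2) unfolding DP_admissible_def by auto
  then have "ereal (fa_integral \<gamma> (oplus \<phi> \<psi>)) \<le> lsc_integral \<gamma> c"
    unfolding lsc_integral_def by (intro Sup_upper) (blast intro: oplus_Cb)
  moreover have "fa_integral \<gamma> (oplus \<phi> \<psi>) = integral\<^sup>L \<mu> \<phi> + integral\<^sup>L \<nu> \<psi>"
    using assms(1) \<open>\<phi> \<in> Cb\<close> \<open>\<psi> \<in> Cb\<close> unfolding Gamma_def by blast
  ultimately show ?thesis by simp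
qed

lemma DP_admissible_le_v_max:
  "DP_admissible c \<phi> \<psi> \<Longrightarrow> ereal (integral\<^sup>L \<mu> \<phi> + integral\<^sup>L \<nu> \<psi>) \<le> v_max \<mu> \<nu> c"
  unfolding v_max_def by (rule Sup_upper) blast

locale dual_value_bound =
  fixes \<mu> :: "'a::topological_space measure" and \<nu> :: "'b::topological_space measure"
    and c :: "'a \<times> 'b \<Rightarrow> ereal" and V b :: real
  assumes \<mu>: "baire_prob \<mu>" and \<nu>: "baire_prob \<nu>"
    and c_lower: "\<And>z. ereal b \<le> c z"
    and V_upper: "\<And>\<phi> \<psi>. DP_admissible c \<phi> \<psi> \<Longrightarrow> integral\<^sup>L \<mu> \<phi> + integral\<^sup>L \<nu> \<psi> \<le> V"
begin

text \<open>\<open>dual_bound F\<close> is the cheapest price of dominating \<^term>\<open>F\<close> by a sum of potentials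
  plus a nonnegative multiple of a continuous minorant of \<^term>\<open>c\<close>, each unit of such a
  minorant being priced at the dual upper bound \<^term>\<open>V\<close>.\<close>
definition dual_vals :: "('a \<times> 'b \<Rightarrow> real) \<Rightarrow> real set" where
  "dual_vals F = {integral\<^sup>L \<mu> \<phi> + integral\<^sup>L \<nu> \<psi> + t * V | \<phi> \<psi> t f.
      \<phi> \<in> Cb \<and> \<psi> \<in> Cb \<and> 0 \<le> t \<and> f \<in> Cb \<and> (\<forall>z. ereal (f z) \<le> c z)
      \<and> (\<forall>z. F z \<le> oplus \<phi> \<psi> z + t * f z)}"

definition dual_bound :: "('a \<times> 'b \<Rightarrow> real) \<Rightarrow> real" where
  "dual_bound F = Inf (dual_vals F)"

lemma dual_valsI:
  "\<phi> \<in> Cb \<Longrightarrow> \<psi> \<in> Cb \<Longrightarrow> 0 \<le> t \<Longrightarrow> f \<in> Cb \<Longrightarrow> (\<And>z. ereal (f z) \<le> c z)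
    \<Longrightarrow> (\<And>z. F z \<le> oplus \<phi> \<psi> z + t * f z)
    \<Longrightarrow> integral\<^sup>L \<mu> \<phi> + integral\<^sup>L \<nu> \<psi> + t * V \<in> dual_vals F"
  unfolding dual_vals_def by blast

lemma dual_valsE:
  assumes "v \<in> dual_vals F"
  obtains \<phi> \<psi> t f where "v = integral\<^sup>L \<mu> \<phi> + integral\<^sup>L \<nu> \<psi> + t * V" "\<phi> \<in> Cb" "\<psi> \<in> Cb"
    "0 \<le> t" "f \<in> Cb" "\<And>z. ereal (f z) \<le> c z" "\<And>z. F z \<le> oplus \<phi> \<psi> z + t * f z"
  using assms unfolding dual_vals_def mem_Collect_eq
  by (elim exE conjE) (rule that, assumption+, blast+)

lemma dual_vals_const_minorant:
  "\<phi> \<in> Cb \<Longrightarrow> \<psi> \<in> Cb \<Longrightarrow> (\<And>z. F z \<le> oplus \<phi> \<psi> z)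
    \<Longrightarrow> integral\<^sup>L \<mu> \<phi> + integral\<^sup>L \<nu> \<psi> \<in> dual_vals F"
  using dual_valsI[of \<phi> \<psi> 0 "\<lambda>z. b" F] c_lower by simp

text \<open>Rescaling the potentials by \<^term>\<open>1 / t\<close> turns a domination with a positive weight
  \<^term>\<open>t\<close> into an admissible dual pair.\<close>
lemma dual_vals_lower_pos_weight:
  assumes "\<phi> \<in> Cb" "\<psi> \<in> Cb" "0 < t" "f \<in> Cb" "\<And>z. ereal (f z) \<le> c z"
    and le: "\<And>z. - M \<le> oplus \<phi> \<psi> z + t * f z"
  shows "- M \<le> integral\<^sup>L \<mu> \<phi> + integral\<^sup>L \<nu> \<psi> + t * V"
proof -
  define s where "s = 1 / t"
  have "0 < s" "s * t = 1"
    using \<open>0 < t\<close> by (simp_all add: s_def)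
  define \<phi>' where "\<phi>' x = (- s) * (\<phi> x + M)" for x
  define \<psi>' where "\<psi>' y = (- s) * \<psi> y" for y
  have "\<phi>' \<in> Cb" "\<psi>' \<in> Cb"
    unfolding \<phi>'_def[abs_def] \<psi>'_def[abs_def]
    by (rule Cb_scale[OF Cb_add[OF assms(1) Cb_const]], rule Cb_scale[OF assms(2)])
  moreover have "ereal (oplus \<phi>' \<psi>' z) \<le> c z" for z
  proof -
    have "s * (- (oplus \<phi> \<psi> z + M)) \<le> s * (t * f z)"
      using le[of z] \<open>0 < s\<close> by (intro mult_left_mono) simp_all
    also have "\<dots> = f z"
      using \<open>s * t = 1\<close> by (simp add: mult.assoc[symmetric])
    finally have "oplus \<phi>' \<psi>' z \<le> f z"
      by (simp add: oplus_apply \<phi>'_def \<psi>'_def algebra_simps)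
    then show ?thesis
      using assms(5)[of z] by (meson ereal_less_eq(3) order_trans)

  qed
  ultimately have "integral\<^sup>L \<mu> \<phi>' + integral\<^sup>L \<nu> \<psi>' \<le> V"
    by (intro V_upper) (simp add: DP_admissible_def)
  moreover have "integral\<^sup>L \<mu> \<phi>' = - s * (integral\<^sup>L \<mu> \<phi> + M)"
    unfolding \<phi>'_def[abs_def] integral_mult_right_zero
    by (simp only: baire_integral_add[OF \<mu> assms(1) Cb_const] baire_integral_const[OF \<mu>])
  moreover have "integral\<^sup>L \<nu> \<psi>' = - s * integral\<^sup>L \<nu> \<psi>"
    unfolding \<psi>'_def[abs_def] by (rule integral_mult_right_zero)

  ultimately have "- s * (integral\<^sup>L \<mu> \<phi> + M + integral\<^sup>L \<nu> \<psi>) \<le> V"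
    by (simp add: algebra_simps)
  then have "t * (- s * (integral\<^sup>L \<mu> \<phi> + M + integral\<^sup>L \<nu> \<psi>)) \<le> t * V"
    by (rule mult_left_mono[OF _ less_imp_le[OF \<open>0 < t\<close>]])

  also have "t * (- s * (integral\<^sup>L \<mu> \<phi> + M + integral\<^sup>L \<nu> \<psi>)) = - (integral\<^sup>L \<mu> \<phi> + M + integral\<^sup>L \<nu> \<psi>)"
    using \<open>s * t = 1\<close> by (simp add: mult.assoc[symmetric] mult.commute[of t s])
  finally show ?thesis
    by simp

qed

lemma dual_vals_lower:
  assumes M: "\<And>z. \<bar>F z\<bar> \<le> M" and v: "v \<in> dual_vals F"
  shows "- M \<le> v"
proof -
  obtain \<phi> \<psi> t f where v: "v = integral\<^sup>L \<mu> \<phi> + integral\<^sup>L \<nu> \<psi> + t * V"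
    and \<phi>: "\<phi> \<in> Cb" and \<psi>: "\<psi> \<in> Cb" and "0 \<le> t" "f \<in> Cb" "\<And>z. ereal (f z) \<le> c z"
    and le: "\<And>z. F z \<le> oplus \<phi> \<psi> z + t * f z"
    using dual_valsE[OF v] by metis
  have ge: "- M \<le> oplus \<phi> \<psi> z + t * f z" for z
    using abs_le_D2[OF M[of z]] le[of z] by simp
  show ?thesis
  proof (cases "t = 0")
    case True
    have "- M \<le> \<phi> x + \<psi> y" for x y
      using ge[of "(x, y)"] True by (simp add: oplus_apply)
    then show ?thesis
      using integral_oplus_ge_const[OF \<mu> \<nu> \<phi> \<psi>] v True by simp
  next
    case False
    then show ?thesis
      using dual_vals_lower_pos_weight[OF \<phi> \<psi> _ \<open>f \<in> Cb\<close>] ge \<open>0 \<le> t\<close> \<open>\<And>z. ereal (f z) \<le> c z\<close> v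
      by simp
  qed
qed

lemma dual_vals_bounds:
  assumes "F \<in> Cb"
  shows "dual_vals F \<noteq> {}" "bdd_below (dual_vals F)"
proof -
  obtain M where M: "\<And>z. \<bar>F z\<bar> \<le> M"
    using Cb_bound[OF assms] by metis
  have "F z \<le> oplus (\<lambda>x. M) (\<lambda>y. 0) z" for z
    using abs_le_D1[OF M[of z]] by (simp add: oplus_apply)
  then have "integral\<^sup>L \<mu> (\<lambda>x. M) + integral\<^sup>L \<nu> (\<lambda>y. 0) \<in> dual_vals F"
    by (rule dual_vals_const_minorant[OF Cb_const Cb_const])
  then show "dual_vals F \<noteq> {}"
    by blast
  show "bdd_below (dual_vals F)"
    using dual_vals_lower[OF M] by (rule bdd_belowI)
qed

lemma dual_bound_le: "F \<in> Cb \<Longrightarrow> v \<in> dual_vals F \<Longrightarrow> dual_bound F \<le> v"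
  unfolding dual_bound_def by (rule cInf_lower[OF _ dual_vals_bounds(2)])

lemma sublinear_dual_bound: "sublinear_on Cb dual_bound"
  unfolding dual_bound_def
proof (rule Cb.sublinear_on_Inf)
  fix F G v w
  assume "v \<in> dual_vals F" "w \<in> dual_vals G"
  obtain \<phi> \<psi> t f where
    v: "v = integral\<^sup>L \<mu> \<phi> + integral\<^sup>L \<nu> \<psi> + t * V" "\<phi> \<in> Cb" "\<psi> \<in> Cb" "0 \<le> t" "f \<in> Cb"
      "\<And>z. ereal (f z) \<le> c z" "\<And>z. F z \<le> oplus \<phi> \<psi> z + t * f z"
    using dual_valsE[OF \<open>v \<in> dual_vals F\<close>] by metis
  obtain \<phi>' \<psi>' t' f' where
    w: "w = integral\<^sup>L \<mu> \<phi>' + integral\<^sup>L \<nu> \<psi>' + t' * V" "\<phi>' \<in> Cb" "\<psi>' \<in> Cb" "0 \<le> t'" "f' \<in> Cb"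
      "\<And>z. ereal (f' z) \<le> c z" "\<And>z. G z \<le> oplus \<phi>' \<psi>' z + t' * f' z"
    using dual_valsE[OF \<open>w \<in> dual_vals G\<close>] by metis
  let ?f = "\<lambda>z. max (f z) (f' z)"
  have max_le: "t * f z + t' * f' z \<le> (t + t') * ?f z" for z
    using mult_left_mono[OF max.cobounded1[of "f z" "f' z"] v(4)]
      mult_left_mono[OF max.cobounded2[of "f' z" "f z"] w(4)]
    by (simp add: distrib_right)
  have FG: "F z + G z \<le> oplus (\<lambda>x. \<phi> x + \<phi>' x) (\<lambda>y. \<psi> y + \<psi>' y) z + (t + t') * ?f z" for z
    using max_le[of z] v(7)[of z] w(7)[of z] unfolding oplus_apply by linarith

  have f: "ereal (?f z) \<le> c z" for z
    using v(6)[of z] w(6)[of z] by (simp add: max_def)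
  have "integral\<^sup>L \<mu> (\<lambda>x. \<phi> x + \<phi>' x) + integral\<^sup>L \<nu> (\<lambda>y. \<psi> y + \<psi>' y) + (t + t') * V
      \<in> dual_vals (\<lambda>z. F z + G z)"
    by (rule dual_valsI[OF Cb_add[OF v(2) w(2)] Cb_add[OF v(3) w(3)] add_nonneg_nonneg[OF v(4) w(4)]
      Cb_max[OF v(5) w(5)] f FG])
  moreover
 have "integral\<^sup>L \<mu> (\<lambda>x. \<phi> x + \<phi>' x) + integral\<^sup>L \<nu> (\<lambda>y. \<psi> y + \<psi>' y) + (t + t') * V = v + w"
    using v w baire_integral_add[OF \<mu> v(2) w(2)] baire_integral_add[OF \<nu> v(3) w(3)]
    by (simp add: algebra_simps)
  ultimately show "\<exists>u\<in>dual_vals (\<lambda>z. F z + G z). u \<le> v + w"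
    by force
next
  fix F v and s :: real
  assume "0 < s" "v \<in> dual_vals F"
  then obtain \<phi> \<psi> t f where
    v: "v = integral\<^sup>L \<mu> \<phi> + integral\<^sup>L \<nu> \<psi> + t * V" "\<phi> \<in> Cb" "\<psi> \<in> Cb" "0 \<le> t" "f \<in> Cb"
      "\<And>z. ereal (f z) \<le> c z" "\<And>z. F z \<le> oplus \<phi> \<psi> z + t * f z"
    using dual_valsE by metis
  have "s * F z \<le> oplus (\<lambda>x. s * \<phi> x) (\<lambda>y. s * \<psi> y) z + (s * t) * f z" for z
    using mult_left_mono[OF v(7)[of z]] \<open>0 < s\<close> by (simp add: oplus_apply algebra_simps)
  then have "integral\<^sup>L \<mu> (\<lambda>x. s * \<phi> x) + integral\<^sup>L \<nu> (\<lambda>y. s * \<psi> y) + (s * t) * V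
      \<in> dual_vals (\<lambda>z. s * F z)"
    using v \<open>0 < s\<close> by (intro dual_valsI Cb_scale) auto
  moreover have "integral\<^sup>L \<mu> (\<lambda>x. s * \<phi> x) + integral\<^sup>L \<nu> (\<lambda>y. s * \<psi> y) + (s * t) * V = s * v"
    using v by (simp add: algebra_simps)
  ultimately show "\<exists>u\<in>dual_vals (\<lambda>z. s * F z). u \<le> s * v"
    by force
qed (use dual_vals_bounds in auto)

theorem
 transport_functional_exists:
  "\<exists>L. positive_functional L
      \<and> (\<forall>\<phi>\<in>Cb. \<forall>\<psi>\<in>Cb. L (oplus \<phi> \<psi>) = integral\<^sup>L \<mu> \<phi> + integral\<^sup>L \<nu> \<psi>)
      \<and> (\<forall>f\<in>Cb. (\<forall>z. ereal (f z) \<le> c z) \<longrightarrow> L f \<le> V)"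
proof -
  interpret sublinear_functional Cb dual_bound
    by standard (rule sublinear_dual_bound)
  obtain L where L: "linear_on Cb L" and L_le: "\<And>F. F \<in> Cb \<Longrightarrow> L F \<le> dual_bound F"
    using hahn_banach by blast
  have upper: "L F \<le> integral\<^sup>L \<mu> \<phi> + integral\<^sup>L \<nu> \<psi>"
    if "F \<in> Cb" "\<phi> \<in> Cb" "\<psi> \<in> Cb" "\<And>z. F z \<le> oplus \<phi> \<psi> z" for F \<phi> \<psi>
    using L_le[OF that(1)] dual_bound_le[OF that(1) dual_vals_const_minorant[OF that(2-4)]] by simp
  have L_oplus: "L (oplus \<phi> \<psi>) = integral\<^sup>L \<mu> \<phi> + integral\<^sup>L \<nu> \<psi>" if "\<phi> \<in> Cb" "\<psi> \<in> Cb" for \<phi> \<psi>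
  proof -
    have "L (\<lambda>z. - oplus \<phi> \<psi> z) \<le> integral\<^sup>L \<mu> (\<lambda>x. - \<phi> x) + integral\<^sup>L \<nu> (\<lambda>y. - \<psi> y)"
      using that by (intro upper Cb_minus oplus_Cb) (simp_all add: oplus_apply)
    then show ?thesis
      using upper[OF oplus_Cb[OF that] that] Cb.linear_on_uminus[OF L oplus_Cb[OF that]] by simp
  qed
  have "oplus (\<lambda>x. 1) (\<lambda>y. 0) = (\<lambda>z. 1)"
    by (rule ext) (simp add: oplus_apply)
  then have "L (\<lambda>z. 1) = L (oplus (\<lambda>x. 1) (\<lambda>y. 0))"
    by (rule arg_cong[where f = L, OF sym])
  also
 have "\<dots> = integral\<^sup>L \<mu> (\<lambda>x. 1) + integral\<^sup>L \<nu> (\<lambda>y. 0)"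
    by (rule L_oplus[OF Cb_const Cb_const])
  also have "\<dots> = 1"
    by (simp only: baire_integral_const[OF \<mu>] baire_integral_const[OF \<nu>] add_0_right)
  finally have "L (\<lambda>z. 1) = 1" .
  moreover have "0 \<le> L f" if "f \<in> Cb" "\<And>z. 0 \<le> f z" for f
    using upper[OF Cb_minus[OF that(1)] Cb_const Cb_const, of 0 0] that(2)
      Cb.linear_on_uminus[OF L that(1)] baire_integral_const[OF \<mu>] baire_integral_const[OF \<nu>]
    by (simp add: oplus_apply)
  moreover have "L f \<le> V" if "f \<in> Cb" "\<And>z. ereal (f z) \<le> c z" for f
  proof -
    have "integral\<^sup>L \<mu> (\<lambda>x. 0) + integral\<^sup>L \<nu> (\<lambda>y. 0) + 1 * V \<in> dual_vals f"
      by (rule dual_valsI[OF Cb_const Cb_const zero_le_one that]) (simp add: oplus_apply)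
    then show ?thesis
      using L_le[OF that(1)] dual_bound_le[OF that(1)] by fastforce
  qed

  ultimately show ?thesis
    using L L_oplus by (auto simp: positive_functional_def)
qed

end

lemma DP_solution_attained_by_plan:
  assumes \<mu>: "baire_prob \<mu>" and \<nu>: "baire_prob \<nu>" and c: "c \<in> lsc_bi"
    and sol: "DP_solution \<mu> \<nu> c \<phi> \<psi>"
  shows "\<exists>\<gamma>\<in>Gamma \<mu> \<nu>. lsc_integral \<gamma> c = ereal (integral\<^sup>L \<mu> \<phi> + integral\<^sup>L \<nu> \<psi>)"
proof -
  define V where "V = integral\<^sup>L \<mu> \<phi> + integral\<^sup>L \<nu> \<psi>"
  have adm: "DP_admissible c \<phi> \<psi>" and v_max: "v_max \<mu> \<nu> c = ereal V"
    using sol unfolding DP_solution_def V_def by auto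
  obtain b :: real where "\<And>z. ereal b \<le> c z"
    using c unfolding lsc_bi_def by blast
  then interpret dual_value_bound \<mu> \<nu> c V b
    using \<mu> \<nu> DP_admissible_le_v_max[of c _ _ \<mu> \<nu>] v_max by unfold_locales auto
  obtain L where "positive_functional L"
    and L_oplus: "\<forall>\<phi>\<in>Cb. \<forall>\<psi>\<in>Cb. L (oplus \<phi> \<psi>) = integral\<^sup>L \<mu> \<phi> + integral\<^sup>L \<nu> \<psi>"
    and L_le: "\<forall>f\<in>Cb. (\<forall>z. ereal (f z) \<le> c z) \<longrightarrow> L f \<le> V"
    using transport_functional_exists by blast
  then obtain \<gamma> where "\<gamma> \<in> M1" and \<gamma>: "\<forall>F\<in>Cb. fa_integral \<gamma> F = L F"
    using positive_functional.positive_functional_representation by blast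
  have "fa_integral \<gamma> (oplus \<phi>' \<psi>') = integral\<^sup>L \<mu> \<phi>' + integral\<^sup>L \<nu> \<psi>'"
    if "\<phi>' \<in> Cb" "\<psi>' \<in> Cb" for \<phi>' \<psi>'
    using \<gamma> L_oplus oplus_Cb[OF that] that by simp
  then have "\<gamma> \<in> Gamma \<mu> \<nu>"
    using \<open>\<gamma> \<in> M1\<close> unfolding Gamma_def by blast

  moreover have "lsc_integral \<gamma> c \<le> ereal V"
    unfolding lsc_integral_def using \<gamma> L_le by (auto intro!: Sup_least)
  moreover have "ereal V \<le> lsc_integral \<gamma> c"
    using weak_duality[OF \<open>\<gamma> \<in> Gamma \<mu> \<nu>\<close> adm] by (simp add: V_def)
  ultimately show ?thesis
    by (auto simp: V_def)
qed

lemma complementary_pair_optimal: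
  assumes adm: "DP_admissible c \<phi> \<psi>" and \<gamma>: "\<gamma> \<in> Gamma \<mu> \<nu>"
    and eq: "lsc_integral \<gamma> c = ereal (integral\<^sup>L \<mu> \<phi> + integral\<^sup>L \<nu> \<psi>)"
  shows "DP_solution \<mu> \<nu> c \<phi> \<psi>" "OP_solution \<mu> \<nu> c \<gamma>" "v_max \<mu> \<nu> c = v_min \<mu> \<nu> c"
proof -
  have "v_max \<mu> \<nu> c \<le> ereal (integral\<^sup>L \<mu> \<phi> + integral\<^sup>L \<nu> \<psi>)"
    unfolding v_max_def
  proof (rule Sup_least)
    fix y
    assume "y \<in> {ereal (integral\<^sup>L \<mu> \<phi>' + integral\<^sup>L \<nu> \<psi>') |\<phi>' \<psi>'. DP_admissible c \<phi>' \<psi>'}"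
    then obtain \<phi>' \<psi>' where "y = ereal (integral\<^sup>L \<mu> \<phi>' + integral\<^sup>L \<nu> \<psi>')" "DP_admissible c \<phi>' \<psi>'"
      by blast
    then show "y \<le> ereal (integral\<^sup>L \<mu> \<phi> + integral\<^sup>L \<nu> \<psi>)"
      using weak_duality[OF \<gamma>, of c \<phi>' \<psi>'] eq by simp

  qed
  then have v_max: "v_max \<mu> \<nu> c = ereal (integral\<^sup>L \<mu> \<phi> + integral\<^sup>L \<nu> \<psi>)"
    using DP_admissible_le_v_max[OF adm] by (rule order_antisym)
  have "ereal (integral\<^sup>L \<mu> \<phi> + integral\<^sup>L \<nu> \<psi>) \<le> v_min \<mu> \<nu> c"
    unfolding v_min_def using weak_duality[OF _ adm] by (rule INF_greatest)
  moreover have "v_min \<mu> \<nu> c \<le> lsc_integral \<gamma> c"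
    unfolding v_min_def using \<gamma> by (rule INF_lower)
  ultimately have v_min: "v_min \<mu> \<nu> c = ereal (integral\<^sup>L \<mu> \<phi> + integral\<^sup>L \<nu> \<psi>)"
    using eq by simp
  show "DP_solution \<mu> \<nu> c \<phi> \<psi>" "OP_solution \<mu> \<nu> c \<gamma>" "v_max \<mu> \<nu> c = v_min \<mu> \<nu> c"
    using adm \<gamma> eq v_max v_min by (simp_all add: DP_solution_def OP_solution_def)
qed

theorem mainTheorem7:
  fixes \<mu> :: "'a::topological_space measure" and \<nu> :: "'b::topological_space measure"
    and c :: "'a \<times> 'b \<Rightarrow> ereal"
  assumes "completely_regular_space (euclidean :: 'a topology)"
    and "Hausdorff_space (euclidean :: 'a topology)"
    and "completely_regular_space (euclidean :: 'b topology)"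
    and "Hausdorff_space (euclidean :: 'b topology)"
    and "baire_prob \<mu>" and "baire_prob \<nu>"
    and "c \<in> lsc_bi"
    and "v_min \<mu> \<nu> c < \<infinity>"
  shows "((\<exists>\<phi> \<psi>. DP_solution \<mu> \<nu> c \<phi> \<psi>)
          \<longleftrightarrow> (\<exists>\<phi> \<psi> \<gamma>. \<phi> \<in> Cb \<and> \<psi> \<in> Cb \<and> \<gamma> \<in> Gamma \<mu> \<nu>
                \<and> (\<forall>z. ereal (oplus \<phi> \<psi> z) \<le> c z)
                \<and> lsc_integral \<gamma> c = ereal (integral\<^sup>L \<mu> \<phi> + integral\<^sup>L \<nu> \<psi>)))
       \<and> ((\<exists>\<phi> \<psi> \<gamma>. \<phi> \<in> Cb \<and> \<psi> \<in> Cb \<and> \<gamma> \<in> Gamma \<mu> \<nu>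
                \<and> (\<forall>z. ereal (oplus \<phi> \<psi> z) \<le> c z)
                \<and> lsc_integral \<gamma> c = ereal (integral\<^sup>L \<mu> \<phi> + integral\<^sup>L \<nu> \<psi>))
          \<longleftrightarrow> ((\<exists>\<phi> \<psi>. DP_solution \<mu> \<nu> c \<phi> \<psi>) \<and> (\<exists>\<gamma>. OP_solution \<mu> \<nu> c \<gamma>)
                \<and> v_max \<mu> \<nu> c = v_min \<mu> \<nu> c))
       \<and> (\<forall>\<phi> \<psi> \<gamma>. \<phi> \<in> Cb \<and> \<psi> \<in> Cb \<and> \<gamma> \<in> Gamma \<mu> \<nu>
                \<and> (\<forall>z. ereal (oplus \<phi> \<psi> z) \<le> c z)
                \<and> lsc_integral \<gamma> c = ereal (integral\<^sup>L \<mu> \<phi> + integral\<^sup>L \<nu> \<psi>)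
             \<longrightarrow> DP_solution \<mu> \<nu> c \<phi> \<psi> \<and> OP_solution \<mu> \<nu> c \<gamma>)"
proof -
  let ?H = "\<lambda>\<phi> \<psi> \<gamma>. \<phi> \<in> Cb \<and> \<psi> \<in> Cb \<and> \<gamma> \<in> Gamma \<mu> \<nu> \<and> (\<forall>z. ereal (oplus \<phi> \<psi> z) \<le> c z)
    \<and> lsc_integral \<gamma> c = ereal (integral\<^sup>L \<mu> \<phi> + integral\<^sup>L \<nu> \<psi>)"
  have optimal: "DP_solution \<mu> \<nu> c \<phi> \<psi> \<and> OP_solution \<mu> \<nu> c \<gamma> \<and> v_max \<mu> \<nu> c = v_min \<mu> \<nu> c"
    if "?H \<phi> \<psi> \<gamma>" for \<phi> \<psi> \<gamma>
    using complementary_pair_optimal[of c \<phi> \<psi> \<gamma> \<mu> \<nu>] that by (simp add: DP_admissible_def)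
  have attained: "\<exists>\<gamma>. ?H \<phi> \<psi> \<gamma>" if "DP_solution \<mu> \<nu> c \<phi> \<psi>" for \<phi> \<psi>
    using DP_solution_attained_by_plan[OF assms(5-7) that] that
    by (auto simp: DP_solution_def DP_admissible_def)
  have equal: "?H \<phi> \<psi> \<gamma>"
    if "DP_solution \<mu> \<nu> c \<phi> \<psi>" "OP_solution \<mu> \<nu> c \<gamma>" "v_max \<mu> \<nu> c = v_min \<mu> \<nu> c" for \<phi> \<psi> \<gamma>
    using that by (auto simp: DP_solution_def OP_solution_def DP_admissible_def)
  show ?thesis
    using optimal attained equal by meson
qed

end
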